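(* Let $\tau\in(0,1]$. Suppose $Y=\mu+\xi$, where $\mu=\mu_n\in\mathbb{R}^n$ and $Z=Z_n\in\mathbb{R}^{n\times p}$ are deterministic, $\xi\in\mathbb{R}^n$ is sub-Gaussian with parameter $K_\xi$, $\|\mu\|^2=\mathcal O(n)$, and $\mu$ is weakly sparse relative to $Z$ with sparsity $s$ at rate $n^\tau$. Let $u\ge s$ for all large $n$ with $u=o(n^\tau/\log p)$, let $\alpha>4K_\xi^2$ be fixed, and let $w_m=w_m(Y;u,\alpha)$. Let $\zeta\in\mathbb R^n$ be any sub-Gaussian random vector with parameter $K_\zeta$ (a fixed constant; $\zeta$ may depend on $\xi$). Then 1. $\mathbb E\big(\sum_{m\in\mathcal M_u}w_m\|P_m^\perp\mu\|^2\big)=o(n^\tau)$; 2. $\mathbb E\big(\sum_{m\in\mathcal M_u}w_m\,\mu^\top P_m^\perp\zeta\big)=o(n^\tau)$.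
   Context: Asymptotics are as $n\to\infty$; $p=p_n$ and all other quantities may depend on $n$. For $u\in\mathbb N$, $\mathcal M_u=\{m\subseteq\{1,\dots,p\}:|m|=u\}$; for $m\in\mathcal M_u$, $Z_m$ is the $n\times u$ submatrix of $Z$ with columns indexed by $m$, $P_m$ is the orthogonal projection of $\mathbb R^n$ onto the column space of $Z_m$, and $P_m^\perp=I_n-P_m$. Weak sparsity: a sequence $\mu=\mu_n\in\mathbb R^n$ is weakly sparse relative to $Z$ with sparsity $s=s_n$ at rate $k=k_n$ if there exist sets $S=S_n\in\mathcal M_s$ with $\|P_S^\perp\mu\|^2=o(k)$. Sub-Gaussian: a mean-zero random vector $\xi\in\mathbb R^n$ is sub-Gaussian with parameter $K$ if $\mathbb E\exp(\lambda^\top\xi)\le\exp(K^2\|\lambda\|^2/2)$ for all $\lambda\in\mathbb R^n$. Exponential weights: $w_m(V;u,\alpha)=\exp(-\|P_m^\perp V\|^2/\alpha)\big/\sum_{k\in\mathcal M_u}\exp(-\|P_k^\perp V\|^2/\alpha)$ for $V\in\mathbb R^n$, $m\in\mathcal M_u$. *)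

theory Defs
  imports "HOL-Probability.Probability" "HOL-Library.Landau_Symbols"
begin

text \<open>Vectors in R^n are represented as functions nat => real, of which only
  the coordinates i < n matter. An n x p matrix is a function nat => nat => real,
  entry (i,j) with i < n, j < p. Column indices are 0-based: {0..<p}.\<close>

definition vinner :: "nat \<Rightarrow> (nat \<Rightarrow> real) \<Rightarrow> (nat \<Rightarrow> real) \<Rightarrow> real" where
  "vinner n x y = (\<Sum>i<n. x i * y i)"

definition vnorm2 :: "nat \<Rightarrow> (nat \<Rightarrow> real) \<Rightarrow> real" where
  "vnorm2 n x = vinner n x x"

definition models :: "nat \<Rightarrow> nat \<Rightarrow> nat set set" where
  "models p u = {m. m \<subseteq> {0..<p} \<and> card m = u}"

definition colspace :: "nat \<Rightarrow> (nat \<Rightarrow> nat \<Rightarrow> real) \<Rightarrow> nat set \<Rightarrow> (nat \<Rightarrow> real) set" where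
  "colspace n Z m = {v. (\<forall>i\<ge>n. v i = 0) \<and>
      (\<exists>\<beta>::nat \<Rightarrow> real. \<forall>i<n. v i = (\<Sum>j\<in>m. Z i j * \<beta> j))}"

definition proj :: "nat \<Rightarrow> (nat \<Rightarrow> nat \<Rightarrow> real) \<Rightarrow> nat set \<Rightarrow> (nat \<Rightarrow> real) \<Rightarrow> (nat \<Rightarrow> real)" where
  "proj n Z m V = (THE w. w \<in> colspace n Z m \<and>
      (\<forall>c\<in>colspace n Z m. vinner n (\<lambda>i. V i - w i) c = 0))"

definition projperp :: "nat \<Rightarrow> (nat \<Rightarrow> nat \<Rightarrow> real) \<Rightarrow> nat set \<Rightarrow> (nat \<Rightarrow> real) \<Rightarrow> (nat \<Rightarrow> real)" where
  "projperp n Z m V = (\<lambda>i. V i - proj n Z m V i)"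

definition expweight :: "nat \<Rightarrow> nat \<Rightarrow> (nat \<Rightarrow> nat \<Rightarrow> real) \<Rightarrow> nat \<Rightarrow> real \<Rightarrow> (nat \<Rightarrow> real) \<Rightarrow> nat set \<Rightarrow> real" where
  "expweight n p Z u \<alpha> V m =
     exp (- vnorm2 n (projperp n Z m V) / \<alpha>) /
     (\<Sum>k\<in>models p u. exp (- vnorm2 n (projperp n Z k V) / \<alpha>))"

definition weakly_sparse ::
  "(nat \<Rightarrow> nat \<Rightarrow> real) \<Rightarrow> (nat \<Rightarrow> nat \<Rightarrow> nat \<Rightarrow> real) \<Rightarrow> (nat \<Rightarrow> nat) \<Rightarrow> (nat \<Rightarrow> nat)
     \<Rightarrow> (nat \<Rightarrow> real) \<Rightarrow> bool" where
  "weakly_sparse \<mu> Z p s k \<longleftrightarrow>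
     (\<exists>S::nat \<Rightarrow> nat set. (\<forall>n. S n \<in> models (p n) (s n)) \<and>
        (\<lambda>n. vnorm2 n (projperp n (Z n) (S n) (\<mu> n))) \<in> o(k))"

definition random_vec :: "'a measure \<Rightarrow> nat \<Rightarrow> ('a \<Rightarrow> nat \<Rightarrow> real) \<Rightarrow> bool" where
  "random_vec M n \<xi> \<longleftrightarrow> (\<forall>i<n. (\<lambda>\<omega>. \<xi> \<omega> i) \<in> borel_measurable M)"

definition subgaussian :: "'a measure \<Rightarrow> nat \<Rightarrow> ('a \<Rightarrow> nat \<Rightarrow> real) \<Rightarrow> real \<Rightarrow> bool" where
  "subgaussian M n \<xi> K \<longleftrightarrow> random_vec M n \<xi> \<and>
     (\<forall>i<n. integrable M (\<lambda>\<omega>. \<xi> \<omega> i) \<and> (\<integral>\<omega>. \<xi> \<omega> i \<partial>M) = 0) \<and>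
     (\<forall>l::nat \<Rightarrow> real. integrable M (\<lambda>\<omega>. exp (vinner n l (\<xi> \<omega>))) \<and>
        (\<integral>\<omega>. exp (vinner n l (\<xi> \<omega>)) \<partial>M) \<le> exp (K\<^sup>2 * vnorm2 n l / 2))"

end

theory Submission
  imports Defs
begin

text \<open>
  Write \<open>rss m = \<parallel>P\<^sub>m\<^sup>\<bottom> Y\<parallel>\<^sup>2\<close>, so that \<open>w\<^sub>m\<close> is proportional to \<open>exp (- rss m / \<alpha>)\<close>. Extend the
  sparse support to a model \<open>S\<close> of size \<open>u\<close>; then \<open>w\<^sub>m \<le> exp (- (rss m - rss S) / \<alpha>)\<close>, and
  expanding \<open>Y = \<mu> + \<xi>\<close> leaves a linear noise term, controlled by the sub-Gaussian moment
  generating function, and the quadratic term \<open>\<parallel>P\<^sub>m \<xi>\<parallel>\<^sup>2\<close>, controlled by a chi-square-type bound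
  obtained by linearising the square with an independent Gaussian vector. As \<open>\<alpha> > 4 K\<^sub>\<xi>\<^sup>2\<close>, the
  expected weight of \<open>m\<close> is at most \<open>exp ((c\<^sub>2 \<parallel>P\<^sub>S\<^sup>\<bottom>\<mu>\<parallel>\<^sup>2 - c\<^sub>1 \<parallel>P\<^sub>m\<^sup>\<bottom>\<mu>\<parallel>\<^sup>2) / \<alpha> + L u)\<close> with \<open>c\<^sub>1 > 0\<close>.
  Models with error above \<open>t\<close> thus contribute at most
  \<open>|M\<^sub>u| (2 \<alpha> / c\<^sub>1) exp ((c\<^sub>2 \<parallel>P\<^sub>S\<^sup>\<bottom>\<mu>\<parallel>\<^sup>2 - c\<^sub>1 t / 2) / \<alpha> + L u)\<close>, and since \<open>log |M\<^sub>u| \<le> u log p\<close>,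
  \<open>u\<close> and \<open>\<parallel>P\<^sub>S\<^sup>\<bottom>\<mu>\<parallel>\<^sup>2\<close> are \<open>o(n\<^sup>\<tau>)\<close>, taking \<open>t = \<epsilon> n\<^sup>\<tau>\<close> proves the first claim.
  For the second, \<open>\<mu>\<^sup>T P\<^sub>m\<^sup>\<bottom> \<zeta> = \<parallel>P\<^sub>m\<^sup>\<bottom>\<mu>\<parallel> Y\<^sub>m\<close> with \<open>Y\<^sub>m\<close> sub-Gaussian with parameter \<open>K\<^sub>\<zeta>\<close>;
  AM-GM bounds the weighted sum by \<open>\<delta>\<close> times the first one plus \<open>max\<^sub>m Y\<^sub>m\<^sup>2 / \<delta>\<close>, and
  \<open>E max\<^sub>m Y\<^sub>m\<^sup>2 = O(log |M\<^sub>u|) = o(n\<^sup>\<tau>)\<close>.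
\<close>

section \<open>Inner products, column spaces and orthogonal projections\<close>

lemma vinner_sym: "vinner n x y = vinner n y x"
  by (simp add: vinner_def mult.commute)

lemma vinner_cong:
  "(\<And>i. i < n \<Longrightarrow> x i = x' i) \<Longrightarrow> (\<And>i. i < n \<Longrightarrow> y i = y' i) \<Longrightarrow> vinner n x y = vinner n x' y'"
  unfolding vinner_def by (intro sum.cong) auto

lemma vinner_add_left: "vinner n (\<lambda>i. x i + y i) z = vinner n x z + vinner n y z"
  by (simp add: vinner_def algebra_simps sum.distrib)

lemma vinner_diff_left: "vinner n (\<lambda>i. x i - y i) z = vinner n x z - vinner n y z"
  by (simp add: vinner_def algebra_simps sum_subtractf)

lemma vinner_scale_left: "vinner n (\<lambda>i. c * x i) z = c * vinner n x z"
  by (simp add: vinner_def sum_distrib_left algebra_simps)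

lemma vinner_sum_left: "vinner n (\<lambda>i. \<Sum>k\<in>K. f k i) z = (\<Sum>k\<in>K. vinner n (f k) z)"
  unfolding vinner_def sum_distrib_right by (rule sum.swap)

lemma vinner_add_right: "vinner n z (\<lambda>i. x i + y i) = vinner n z x + vinner n z y"
  by (simp add: vinner_def algebra_simps sum.distrib)

lemma vinner_diff_right: "vinner n z (\<lambda>i. x i - y i) = vinner n z x - vinner n z y"
  by (simp add: vinner_def algebra_simps sum_subtractf)

lemma vinner_scale_right: "vinner n z (\<lambda>i. c * x i) = c * vinner n z x"
  by (simp add: vinner_def sum_distrib_left algebra_simps)

lemma vinner_sum_right: "vinner n z (\<lambda>i. \<Sum>k\<in>K. f k i) = (\<Sum>k\<in>K. vinner n z (f k))"
  unfolding vinner_def sum_distrib_left by (rule sum.swap)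

lemma vinner_zero_left: "(\<And>i. i < n \<Longrightarrow> x i = 0) \<Longrightarrow> vinner n x y = 0"
  by (simp add: vinner_def)

lemma vnorm2_nonneg: "0 \<le> vnorm2 n x"
  by (simp add: vnorm2_def vinner_def sum_nonneg)

lemma vnorm2_eq_0D: "vnorm2 n x = 0 \<Longrightarrow> i < n \<Longrightarrow> x i = 0"
  unfolding vnorm2_def vinner_def by (subst (asm) sum_nonneg_eq_0_iff) auto

lemma vnorm2_add:
  "vnorm2 n (\<lambda>i. x i + y i) = vnorm2 n x + 2 * vinner n x y + vnorm2 n y"
  unfolding vnorm2_def vinner_add_left vinner_add_right using vinner_sym[of n y x] by simp

lemma vnorm2_diff_le:
  assumes "(\<eta>::real) > 0"
  shows "vnorm2 n (\<lambda>i. x i - y i) \<le> (1 + \<eta>) * vnorm2 n x + (1 + 1/\<eta>) * vnorm2 n y"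
proof -
  have "(a - b)\<^sup>2 \<le> (1 + \<eta>) * a\<^sup>2 + (1 + 1/\<eta>) * b\<^sup>2" for a b :: real
  proof -
    have "0 \<le> (\<eta> * a + b)\<^sup>2 / \<eta>" using assms by simp
    also have "\<dots> = \<eta> * a\<^sup>2 + 2 * a * b + b\<^sup>2 / \<eta>"
      using assms by (simp add: power2_eq_square field_simps)
    finally show ?thesis by (simp add: power2_eq_square algebra_simps)
  qed
  then show ?thesis
    unfolding vnorm2_def vinner_def
    by (simp add: sum_distrib_left sum.distrib[symmetric] power2_eq_square[symmetric] sum_mono)
qed

definition col :: "nat \<Rightarrow> (nat \<Rightarrow> nat \<Rightarrow> real) \<Rightarrow> nat \<Rightarrow> nat \<Rightarrow> real" where
  "col n Z j = (\<lambda>i. if i < n then Z i j else 0)"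

lemma colspace_outside: "v \<in> colspace n Z m \<Longrightarrow> \<not> i < n \<Longrightarrow> v i = 0"
  by (simp add: colspace_def)

lemma colspace_zero: "(\<lambda>i. 0) \<in> colspace n Z m"
  unfolding colspace_def by (auto intro: exI[of _ "\<lambda>_. 0"])

lemma colspace_add:
  assumes "x \<in> colspace n Z m" "y \<in> colspace n Z m"
  shows "(\<lambda>i. x i + y i) \<in> colspace n Z m"
proof -
  obtain a b where "\<forall>i<n. x i = (\<Sum>j\<in>m. Z i j * a j)" "\<forall>i<n. y i = (\<Sum>j\<in>m. Z i j * b j)"
    using assms unfolding colspace_def by blast
  then have "\<forall>i<n. x i + y i = (\<Sum>j\<in>m. Z i j * (a j + b j))"
    by (simp add: algebra_simps sum.distrib)
  then show ?thesis using assms unfolding colspace_def by auto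
qed

lemma colspace_scale:
  assumes "x \<in> colspace n Z m"
  shows "(\<lambda>i. c * x i) \<in> colspace n Z m"
proof -
  obtain a where "\<forall>i<n. x i = (\<Sum>j\<in>m. Z i j * a j)"
    using assms unfolding colspace_def by blast
  then have "\<forall>i<n. c * x i = (\<Sum>j\<in>m. Z i j * (c * a j))"
    by (simp add: algebra_simps sum_distrib_left)
  then show ?thesis using assms unfolding colspace_def by auto
qed

lemma colspace_diff:
  "x \<in> colspace n Z m \<Longrightarrow> y \<in> colspace n Z m \<Longrightarrow> (\<lambda>i. x i - y i) \<in> colspace n Z m"
  using colspace_add[of x n Z m "\<lambda>i. (-1) * y i"] colspace_scale[of y n Z m "-1"] by simp

lemma colspace_sum:
  "finite K \<Longrightarrow> (\<And>k. k \<in> K \<Longrightarrow> f k \<in> colspace n Z m)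
    \<Longrightarrow> (\<lambda>i. \<Sum>k\<in>K. c k * f k i) \<in> colspace n Z m"
proof (induction K rule: finite_induct)
  case empty
  then show ?case using colspace_zero by simp
next
  case (insert k K)
  then have "(\<lambda>i. c k * f k i + (\<Sum>k\<in>K. c k * f k i)) \<in> colspace n Z m"
    by (intro colspace_add colspace_scale) auto
  then show ?case using insert by simp
qed

lemma colspace_col:
  assumes "j \<in> m" "finite m"
  shows "col n Z j \<in> colspace n Z m"
proof -
  have "\<forall>i<n. col n Z j i = (\<Sum>k\<in>m. Z i k * (if k = j then 1 else 0))"
    using assms by (simp add: col_def if_distrib cong: if_cong)
  then show ?thesis unfolding colspace_def col_def by auto
qed

lemma colspace_mono:
  assumes "finite m'" "m \<subseteq> m'"
  shows "colspace n Z m \<subseteq> colspace n Z m'"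
proof
  fix v assume "v \<in> colspace n Z m"
  then obtain a where a: "\<forall>i<n. v i = (\<Sum>j\<in>m. Z i j * a j)" and v: "\<forall>i\<ge>n. v i = 0"
    unfolding colspace_def by auto
  have "(\<Sum>j\<in>m'. Z i j * (if j \<in> m then a j else 0)) = (\<Sum>j\<in>m. Z i j * a j)" for i
    by (rule sum.mono_neutral_cong_right) (use assms in auto)
  then show "v \<in> colspace n Z m'"
    using a v unfolding colspace_def by (auto intro!: exI[of _ "\<lambda>j. if j \<in> m then a j else 0"])
qed

lemma colspace_insert_decomp:
  assumes "v \<in> colspace n Z (insert j m)" "j \<notin> m" "finite m"
  obtains b c where "c \<in> colspace n Z m" "\<forall>i<n. v i = b * col n Z j i + c i"
proof -
  obtain a where a: "\<forall>i<n. v i = (\<Sum>k\<in>insert j m. Z i k * a k)"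
    using assms(1) unfolding colspace_def by auto
  define c where "c = (\<lambda>i. if i < n then (\<Sum>k\<in>m. Z i k * a k) else 0)"
  have "c \<in> colspace n Z m" unfolding colspace_def c_def by auto
  moreover have "\<forall>i<n. v i = a j * col n Z j i + c i"
    using a assms(2,3) by (simp add: c_def col_def)
  ultimately show ?thesis by (rule that)
qed

definition orthonormal :: "nat \<Rightarrow> (nat \<Rightarrow> real) set \<Rightarrow> bool" where
  "orthonormal n E \<longleftrightarrow> (\<forall>e\<in>E. \<forall>e'\<in>E. vinner n e e' = (if e = e' then 1 else 0))"

definition in_span :: "nat \<Rightarrow> (nat \<Rightarrow> real) set \<Rightarrow> (nat \<Rightarrow> real) \<Rightarrow> bool" where
  "in_span n E c \<longleftrightarrow> (\<exists>\<gamma>. \<forall>i<n. c i = (\<Sum>e\<in>E. \<gamma> e * e i))"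

definition orthonormal_basis ::
    "nat \<Rightarrow> (nat \<Rightarrow> nat \<Rightarrow> real) \<Rightarrow> nat set \<Rightarrow> (nat \<Rightarrow> real) set \<Rightarrow> bool" where
  "orthonormal_basis n Z m E \<longleftrightarrow> finite E \<and> card E \<le> card m \<and> E \<subseteq> colspace n Z m \<and>
     orthonormal n E \<and> (\<forall>c\<in>colspace n Z m. in_span n E c)"

lemma orthonormal_sum_collapse:
  assumes "finite E" "orthonormal n E" "e \<in> E"
  shows "(\<Sum>e'\<in>E. \<gamma> e' * vinner n e e') = \<gamma> e"
proof -
  have "(\<Sum>e'\<in>E. \<gamma> e' * vinner n e e') = (\<Sum>e'\<in>E. if e' = e then \<gamma> e' else 0)"
    using assms(2,3) unfolding orthonormal_def by (intro sum.cong) auto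
  also have "\<dots> = \<gamma> e" using assms(1,3) by simp
  finally show ?thesis .
qed

lemma orthonormal_coeff:
  assumes "finite E" "orthonormal n E" "\<And>i. i < n \<Longrightarrow> c i = (\<Sum>e\<in>E. \<gamma> e * e i)" "e \<in> E"
  shows "vinner n e c = \<gamma> e"
proof -
  have "vinner n e c = vinner n e (\<lambda>i. \<Sum>e'\<in>E. \<gamma> e' * e' i)"
    by (rule vinner_cong) (use assms(3) in auto)
  also have "\<dots> = \<gamma> e"
    by (simp add: vinner_sum_right vinner_scale_right orthonormal_sum_collapse assms)
  finally show ?thesis .
qed

lemma vnorm2_orthonormal_comb:
  assumes "finite E" "orthonormal n E"
  shows "vnorm2 n (\<lambda>i. \<Sum>e\<in>E. g e * e i) = (\<Sum>e\<in>E. (g e)\<^sup>2)"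
  unfolding vnorm2_def
  by (simp add: orthonormal_coeff[OF assms] vinner_sum_left vinner_scale_left power2_eq_square)

lemma orthonormal_residual:
  assumes "finite E" "orthonormal n E" "e \<in> E"
  shows "vinner n e (\<lambda>i. v i - (\<Sum>e'\<in>E. vinner n e' v * e' i)) = 0"
  using assms
  by (simp add: vinner_diff_right vinner_sum_right vinner_scale_right orthonormal_sum_collapse)

lemma in_spanI: "(\<And>i. i < n \<Longrightarrow> c i = (\<Sum>e\<in>E. \<gamma> e * e i)) \<Longrightarrow> in_span n E c"
  unfolding in_span_def by (rule exI[of _ \<gamma>]) simp

lemma in_span_lincomb:
  assumes "in_span n E x" "in_span n E y" "\<And>i. i < n \<Longrightarrow> c i = a * x i + y i"
  shows "in_span n E c"
proof -
  obtain \<gamma> \<delta> where \<gamma>: "\<forall>i<n. x i = (\<Sum>e\<in>E. \<gamma> e * e i)" and \<delta>: "\<forall>i<n. y i = (\<Sum>e\<in>E. \<delta> e * e i)"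
    using assms(1,2) unfolding in_span_def by blast
  have "c i = (\<Sum>e\<in>E. (a * \<gamma> e + \<delta> e) * e i)" if "i < n" for i
  proof -
    have "c i = a * (\<Sum>e\<in>E. \<gamma> e * e i) + (\<Sum>e\<in>E. \<delta> e * e i)"
      using assms(3) \<gamma> \<delta> that by simp
    also have "\<dots> = (\<Sum>e\<in>E. (a * \<gamma> e + \<delta> e) * e i)"
      by (simp add: sum_distrib_left sum.distrib[symmetric] distrib_right mult.assoc)
    finally show ?thesis .
  qed
  then show ?thesis by (rule in_spanI)
qed

lemma in_span_mono:
  assumes "in_span n E c" "E \<subseteq> E'" "finite E'"
  shows "in_span n E' c"
proof -
  obtain \<gamma> where \<gamma>: "\<forall>i<n. c i = (\<Sum>e\<in>E. \<gamma> e * e i)"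
    using assms(1) unfolding in_span_def by blast
  have "(\<Sum>e\<in>E'. (if e \<in> E then \<gamma> e else 0) * e i) = (\<Sum>e\<in>E. \<gamma> e * e i)" for i
    by (rule sum.mono_neutral_cong_right) (use assms(2,3) in auto)
  then show ?thesis using \<gamma> by (intro in_spanI[where \<gamma>="\<lambda>e. if e \<in> E then \<gamma> e else 0"]) simp
qed

text \<open>One Gram--Schmidt step: normalise the residual of \<open>v\<close>, unless it vanishes.\<close>
lemma orthonormal_extend:
  assumes "finite E" "orthonormal n E"
  obtains c E' where "E \<subseteq> E'" "E' \<subseteq> insert (\<lambda>i. c * (v i - (\<Sum>e\<in>E. vinner n e v * e i))) E"
    "orthonormal n E'" "in_span n E' v"
proof -
  define z where "z = (\<lambda>i. v i - (\<Sum>e\<in>E. vinner n e v * e i))"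
  have z_orth: "vinner n e z = 0" if "e \<in> E" for e
    unfolding z_def by (rule orthonormal_residual[OF assms that])
  show ?thesis
  proof (cases "vnorm2 n z = 0")
    case True
    then have "v i = (\<Sum>e\<in>E. vinner n e v * e i)" if "i < n" for i
      using vnorm2_eq_0D[of n z i] that unfolding z_def by simp
    then have "in_span n E v" by (rule in_spanI)
    with assms(2) show ?thesis by (intro that[of E 0]) auto
  next
    case False
    define N where "N = sqrt (vnorm2 n z)"
    have N: "N > 0" using False vnorm2_nonneg[of n z] unfolding N_def by simp
    define q where "q = (\<lambda>i. (1 / N) * z i)"
    have "vinner n q q = (1 / N) * (1 / N) * N\<^sup>2"
      unfolding q_def vinner_scale_left vinner_scale_right N_def
      using vnorm2_nonneg[of n z] by (simp add: vnorm2_def)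
    then have qq: "vinner n q q = 1" using N by (simp add: power2_eq_square)
    have qe: "vinner n e q = 0" "vinner n q e = 0" if "e \<in> E" for e
      using z_orth[OF that] vinner_sym[of n q e] unfolding q_def vinner_scale_right by simp_all
    have q_notin: "q \<notin> E" using qe qq by fastforce
    have "orthonormal n (insert q E)"
      using assms(2) qq qe q_notin unfolding orthonormal_def by auto
    moreover have "in_span n (insert q E) v"
    proof -
      let ?\<gamma> = "\<lambda>e. if e = q then N else vinner n e v"
      have "(\<Sum>e\<in>insert q E. ?\<gamma> e * e i) = N * q i + (\<Sum>e\<in>E. vinner n e v * e i)" for i
        using assms(1) q_notin by (simp add: sum.insert) (intro sum.cong, auto)
      then have "v i = (\<Sum>e\<in>insert q E. ?\<gamma> e * e i)" for i
        using N by (simp add: q_def z_def)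
      then show ?thesis by (rule in_spanI)
    qed
    moreover have "insert q E \<subseteq> insert (\<lambda>i. (1 / N) * z i) E" by (simp add: q_def)
    ultimately show ?thesis unfolding z_def by (intro that[of "insert q E" "1 / N"]) auto
  qed
qed

lemma orthonormal_basis_insert:
  assumes "orthonormal_basis n Z m E" "finite m" "j \<notin> m"
  obtains E' where "orthonormal_basis n Z (insert j m) E'"
proof -
  have E: "finite E" "card E \<le> card m" "E \<subseteq> colspace n Z m" "orthonormal n E"
    "\<And>c. c \<in> colspace n Z m \<Longrightarrow> in_span n E c"
    using assms(1) unfolding orthonormal_basis_def by auto
  let ?v = "col n Z j"
  obtain c E' where E': "E \<subseteq> E'" "E' \<subseteq> insert (\<lambda>i. c * (?v i - (\<Sum>e\<in>E. vinner n e ?v * e i))) E"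
    "orthonormal n E'" "in_span n E' ?v"
    using orthonormal_extend[OF E(1,4)] .
  have fin: "finite E'" using E'(2) E(1) finite_subset by blast
  have sub: "colspace n Z m \<subseteq> colspace n Z (insert j m)"
    by (rule colspace_mono) (use assms(2) in auto)
  have v_in: "?v \<in> colspace n Z (insert j m)" by (rule colspace_col) (use assms(2) in auto)
  have "(\<lambda>i. c * (?v i - (\<Sum>e\<in>E. vinner n e ?v * e i))) \<in> colspace n Z (insert j m)"
    using E(1,3) sub by (intro colspace_scale colspace_diff colspace_sum v_in) auto
  then have "E' \<subseteq> colspace n Z (insert j m)" using E'(2) E(3) sub by auto
  moreover have "card E' \<le> card (insert j m)"
    using card_mono[OF _ E'(2)] E(1,2) assms(2,3) by (auto simp: card_insert_if split: if_splits)
  moreover have "in_span n E' v" if v: "v \<in> colspace n Z (insert j m)" for v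
  proof -
    obtain b c' where "c' \<in> colspace n Z m" "\<forall>i<n. v i = b * ?v i + c' i"
      using colspace_insert_decomp[OF v assms(3,2)] .
    then show ?thesis
      by (intro in_span_lincomb[OF E'(4) in_span_mono[OF E(5) E'(1) fin]]) auto
  qed
  ultimately have "orthonormal_basis n Z (insert j m) E'"
    using fin E'(3) unfolding orthonormal_basis_def by auto
  then show ?thesis by (rule that)
qed

lemma orthonormal_basis_exists:
  assumes "finite m"
  shows "\<exists>E. orthonormal_basis n Z m E"
  using assms
proof (induction m rule: finite_induct)
  case empty
  have "v \<in> colspace n Z {} \<Longrightarrow> in_span n {} v" for v
    unfolding colspace_def in_span_def by simp
  then have "orthonormal_basis n Z {} {}"
    unfolding orthonormal_basis_def orthonormal_def by auto
  then show ?case by blast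
next
  case (insert j m)
  then obtain E where "orthonormal_basis n Z m E" by blast
  then obtain E' where "orthonormal_basis n Z (insert j m) E'"
    using orthonormal_basis_insert insert(1,2) by blast
  then show ?case ..
qed

definition onb :: "nat \<Rightarrow> (nat \<Rightarrow> nat \<Rightarrow> real) \<Rightarrow> nat set \<Rightarrow> (nat \<Rightarrow> real) set" where
  "onb n Z m = (SOME E. orthonormal_basis n Z m E)"

lemma orthonormal_basis_onb: "finite m \<Longrightarrow> orthonormal_basis n Z m (onb n Z m)"
  unfolding onb_def using orthonormal_basis_exists by (rule someI_ex)

lemma orthonormal_basis_expand:
  assumes "orthonormal_basis n Z m E" "c \<in> colspace n Z m" "i < n"
  shows "c i = (\<Sum>e\<in>E. vinner n e c * e i)"
proof -
  have E: "finite E" "orthonormal n E" using assms(1) unfolding orthonormal_basis_def by auto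
  obtain \<gamma> where \<gamma>: "\<forall>i<n. c i = (\<Sum>e\<in>E. \<gamma> e * e i)"
    using assms(1,2) unfolding orthonormal_basis_def in_span_def by blast
  then have "vinner n e c = \<gamma> e" if "e \<in> E" for e
    using orthonormal_coeff[OF E _ that] by blast
  then show ?thesis using \<gamma> assms(3) by simp
qed

lemma vinner_colspace:
  assumes "orthonormal_basis n Z m E" "c \<in> colspace n Z m"
  shows "vinner n y c = (\<Sum>e\<in>E. vinner n e y * vinner n e c)"
proof -
  have "vinner n y c = vinner n y (\<lambda>i. \<Sum>e\<in>E. vinner n e c * e i)"
    by (rule vinner_cong) (use orthonormal_basis_expand[OF assms] in auto)
  also have "\<dots> = (\<Sum>e\<in>E. vinner n e c * vinner n y e)"
    by (simp add: vinner_sum_right vinner_scale_right)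
  also have "\<dots> = (\<Sum>e\<in>E. vinner n e y * vinner n e c)"
    by (simp add: vinner_sym[of n y] mult.commute)
  finally show ?thesis .
qed

lemma proj_eq:
  assumes "orthonormal_basis n Z m E"
  shows "proj n Z m V = (\<lambda>i. \<Sum>e\<in>E. vinner n e V * e i)"
proof -
  define w where "w = (\<lambda>i. \<Sum>e\<in>E. vinner n e V * e i)"
  have E: "finite E" "E \<subseteq> colspace n Z m" "orthonormal n E"
    using assms unfolding orthonormal_basis_def by auto
  have w_in: "w \<in> colspace n Z m"
    unfolding w_def by (rule colspace_sum) (use E in auto)
  have w_orth: "vinner n (\<lambda>i. V i - w i) c = 0" if "c \<in> colspace n Z m" for c
  proof -
    have "vinner n (\<lambda>i. V i - w i) c = (\<Sum>e\<in>E. vinner n e (\<lambda>i. V i - w i) * vinner n e c)"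
      by (rule vinner_colspace[OF assms that])
    also have "\<dots> = 0" using orthonormal_residual[OF E(1,3)] by (simp add: w_def)
    finally show ?thesis .
  qed
  show ?thesis
    unfolding proj_def w_def[symmetric]
  proof (rule the_equality)
    show "w \<in> colspace n Z m \<and> (\<forall>c\<in>colspace n Z m. vinner n (\<lambda>i. V i - w i) c = 0)"
      using w_in w_orth by blast
    fix w' assume w': "w' \<in> colspace n Z m \<and> (\<forall>c\<in>colspace n Z m. vinner n (\<lambda>i. V i - w' i) c = 0)"
    define d where "d = (\<lambda>i. w' i - w i)"
    have d_in: "d \<in> colspace n Z m" unfolding d_def using colspace_diff w' w_in by blast
    have "vnorm2 n d = vinner n (\<lambda>i. V i - w i) d - vinner n (\<lambda>i. V i - w' i) d"
      unfolding d_def vnorm2_def by (simp add: vinner_diff_left)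
    then have "vnorm2 n d = 0" using w_orth[OF d_in] w' d_in by simp
    then have "d i = 0" for i
      using vnorm2_eq_0D[of n d i] colspace_outside[OF d_in, of i] by (cases "i < n") auto
    then show "w' = w" unfolding d_def by auto
  qed
qed

lemma proj_in_colspace: "finite m \<Longrightarrow> proj n Z m V \<in> colspace n Z m"
  using proj_eq[OF orthonormal_basis_onb] orthonormal_basis_onb[of m n Z]
  unfolding orthonormal_basis_def by (auto intro!: colspace_sum)

lemma projperp_eq:
  "orthonormal_basis n Z m E \<Longrightarrow> projperp n Z m V = (\<lambda>i. V i - (\<Sum>e\<in>E. vinner n e V * e i))"
  unfolding projperp_def using proj_eq by simp

lemma vinner_projperp_left:
  assumes "orthonormal_basis n Z m E"
  shows "vinner n (projperp n Z m A) B = vinner n A B - (\<Sum>e\<in>E. vinner n e A * vinner n e B)"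
  unfolding projperp_eq[OF assms] vinner_diff_left vinner_sum_left vinner_scale_left by simp

lemma vinner_projperp_right:
  assumes "orthonormal_basis n Z m E"
  shows "vinner n A (projperp n Z m B) = vinner n A B - (\<Sum>e\<in>E. vinner n e A * vinner n e B)"
  unfolding projperp_eq[OF assms] vinner_diff_right vinner_sum_right vinner_scale_right
  by (simp add: vinner_sym[of n A] mult.commute)

lemma vinner_projperp_swap:
  "finite m \<Longrightarrow> vinner n A (projperp n Z m B) = vinner n (projperp n Z m A) B"
  unfolding vinner_projperp_left[OF orthonormal_basis_onb] vinner_projperp_right[OF orthonormal_basis_onb] ..

lemma vnorm2_projperp:
  assumes "orthonormal_basis n Z m E"
  shows "vnorm2 n (projperp n Z m V) = vnorm2 n V - (\<Sum>e\<in>E. (vinner n e V)\<^sup>2)"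
proof -
  have E: "finite E" "orthonormal n E" using assms unfolding orthonormal_basis_def by auto
  have "vinner n e (projperp n Z m V) = 0" if "e \<in> E" for e
    unfolding projperp_eq[OF assms] by (rule orthonormal_residual[OF E that])
  then have "vnorm2 n (projperp n Z m V) = vinner n V (projperp n Z m V)"
    unfolding vnorm2_def vinner_projperp_left[OF assms] by simp
  also have "\<dots> = vnorm2 n V - (\<Sum>e\<in>E. (vinner n e V)\<^sup>2)"
    unfolding vinner_projperp_right[OF assms] vnorm2_def by (simp add: power2_eq_square)
  finally show ?thesis .
qed

lemma projperp_min:
  assumes "finite m" "c \<in> colspace n Z m"
  shows "vnorm2 n (projperp n Z m V) \<le> vnorm2 n (\<lambda>i. V i - c i)"
proof -
  let ?E = "onb n Z m"
  have E: "orthonormal_basis n Z m ?E" using orthonormal_basis_onb[OF assms(1)] .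
  define d where "d = (\<lambda>i. proj n Z m V i - c i)"
  have d_in: "d \<in> colspace n Z m"
    unfolding d_def using colspace_diff proj_in_colspace assms by blast
  have "vinner n (projperp n Z m V) d = 0"
    unfolding vinner_projperp_left[OF E] vinner_colspace[OF E d_in, of V] by simp
  moreover have "vnorm2 n (\<lambda>i. V i - c i) = vnorm2 n (\<lambda>i. projperp n Z m V i + d i)"
    unfolding d_def projperp_def by simp
  ultimately show ?thesis using vnorm2_add vnorm2_nonneg[of n d] by simp
qed

lemma projperp_antimono:
  assumes "finite m'" "m \<subseteq> m'"
  shows "vnorm2 n (projperp n Z m' V) \<le> vnorm2 n (projperp n Z m V)"
proof -
  have "proj n Z m V \<in> colspace n Z m'"
    using proj_in_colspace[OF finite_subset[OF assms(2,1)]] colspace_mono[OF assms] by blast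
  from projperp_min[OF assms(1) this] show ?thesis unfolding projperp_def .
qed

section \<open>Gaussian linearisation and sub-Gaussian vectors\<close>

definition std_normal :: "real measure" where
  "std_normal = density lborel (\<lambda>x. ennreal (std_normal_density x))"

lemma prob_space_std_normal: "prob_space std_normal"
  unfolding std_normal_def by (rule prob_space_normal_density) simp

lemma sets_std_normal [simp]: "sets std_normal = sets borel"
  by (simp add: std_normal_def)

lemma borel_measurable_std_normal:
  "f \<in> borel_measurable std_normal \<longleftrightarrow> f \<in> borel_measurable borel"
  by (simp add: measurable_cong_sets[OF sets_std_normal refl])

lemma nn_integral_std_normal:
  assumes "f \<in> borel_measurable borel"
  shows "(\<integral>\<^sup>+x. f x \<partial>std_normal) = (\<integral>\<^sup>+x. ennreal (std_normal_density x) * f x \<partial>lborel)"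
  unfolding std_normal_def using assms by (intro nn_integral_density) auto

lemma nn_integral_normal_density: "0 < \<sigma> \<Longrightarrow> (\<integral>\<^sup>+x. ennreal (normal_density \<mu> \<sigma> x) \<partial>lborel) = 1"
  by (subst nn_integral_eq_integral) auto

lemma std_normal_mgf: "(\<integral>\<^sup>+x. ennreal (exp (a * x)) \<partial>std_normal) = ennreal (exp (a\<^sup>2 / 2))"
proof -
  have "std_normal_density x * exp (a * x) = exp (a\<^sup>2 / 2) * normal_density a 1 x" for x
  proof -
    have "- x\<^sup>2 / 2 + a * x = a\<^sup>2 / 2 + (- (x - a)\<^sup>2 / 2)"
      by (simp add: power2_eq_square field_simps)
    then show ?thesis
      unfolding std_normal_density_def normal_density_def by (simp add: mult_exp_exp)
  qed
  then have "(\<integral>\<^sup>+x. ennreal (exp (a * x)) \<partial>std_normal)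
      = (\<integral>\<^sup>+x. ennreal (exp (a\<^sup>2 / 2)) * ennreal (normal_density a 1 x) \<partial>lborel)"
    by (simp add: nn_integral_std_normal ennreal_mult'[symmetric])
  also have "\<dots> = ennreal (exp (a\<^sup>2 / 2))"
    by (simp add: nn_integral_cmult nn_integral_normal_density)
  finally show ?thesis .
qed

lemma std_normal_exp_square:
  assumes "0 \<le> b" "b < 1/2"
  shows "(\<integral>\<^sup>+x. ennreal (exp (b * x\<^sup>2)) \<partial>std_normal) = ennreal (1 / sqrt (1 - 2 * b))"
proof -
  define \<sigma> where "\<sigma> = 1 / sqrt (1 - 2 * b)"
  have \<sigma>: "\<sigma> > 0" "\<sigma>\<^sup>2 = 1 / (1 - 2 * b)"
    using assms unfolding \<sigma>_def by (simp_all add: power_divide)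
  have "std_normal_density x * exp (b * x\<^sup>2) = \<sigma> * normal_density 0 \<sigma> x" for x
  proof -
    have "sqrt (2 * pi * \<sigma>\<^sup>2) = sqrt (2 * pi) * \<sigma>" using \<sigma>(1) by (simp add: real_sqrt_mult)
    moreover have "- x\<^sup>2 / (2 * \<sigma>\<^sup>2) = - x\<^sup>2 / 2 + b * x\<^sup>2"
      using assms unfolding \<sigma>(2) by (simp add: field_simps)
    ultimately have "normal_density 0 \<sigma> x = exp (- x\<^sup>2 / 2 + b * x\<^sup>2) / (sqrt (2 * pi) * \<sigma>)"
      unfolding normal_density_def diff_zero by simp
    then have "\<sigma> * normal_density 0 \<sigma> x = exp (- x\<^sup>2 / 2 + b * x\<^sup>2) / sqrt (2 * pi)"
      using \<sigma>(1) by simp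
    moreover have "std_normal_density x * exp (b * x\<^sup>2) = exp (- x\<^sup>2 / 2 + b * x\<^sup>2) / sqrt (2 * pi)"
      unfolding std_normal_density_def exp_add by simp
    ultimately show ?thesis by simp
  qed
  then have "(\<integral>\<^sup>+x. ennreal (exp (b * x\<^sup>2)) \<partial>std_normal)
      = (\<integral>\<^sup>+x. ennreal (\<sigma> * normal_density 0 \<sigma> x) \<partial>lborel)"
    by (simp add: nn_integral_std_normal ennreal_mult'[symmetric])
  also have "\<dots> = ennreal \<sigma> * (\<integral>\<^sup>+x. ennreal (normal_density 0 \<sigma> x) \<partial>lborel)"
    using \<sigma>(1) by (simp add: ennreal_mult nn_integral_cmult)
  also have "\<dots> = ennreal \<sigma>"
    using \<sigma>(1) by (simp add: nn_integral_normal_density)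
  finally show ?thesis unfolding \<sigma>_def .
qed

lemma exp_sum_squares_gaussian:
  assumes "finite E" "s\<^sup>2 = 2 * c"
  shows "ennreal (exp (c * (\<Sum>e\<in>E. (t e)\<^sup>2)))
    = (\<integral>\<^sup>+g. ennreal (exp (s * (\<Sum>e\<in>E. g e * t e))) \<partial>PiM E (\<lambda>_. std_normal))"
proof -
  interpret product_prob_space "\<lambda>_. std_normal"
    by (simp add: product_prob_space_def product_prob_space_axioms_def product_sigma_finite_def
        prob_space_std_normal prob_space_imp_sigma_finite)
  have "ennreal (exp (c * (\<Sum>e\<in>E. (t e)\<^sup>2))) = (\<Prod>e\<in>E. ennreal (exp (c * (t e)\<^sup>2)))"
    by (simp add: exp_sum assms(1) sum_distrib_left prod_ennreal)
  also have "\<dots> = (\<Prod>e\<in>E. (\<integral>\<^sup>+x. ennreal (exp ((s * t e) * x)) \<partial>std_normal))"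
    using assms(2) by (simp add: std_normal_mgf power_mult_distrib)
  also have "\<dots> = (\<integral>\<^sup>+g. (\<Prod>e\<in>E. ennreal (exp ((s * t e) * g e))) \<partial>PiM E (\<lambda>_. std_normal))"
    by (rule product_nn_integral_prod[symmetric])
      (simp_all add: assms(1) borel_measurable_std_normal)
  also have "\<dots> = (\<integral>\<^sup>+g. ennreal (exp (s * (\<Sum>e\<in>E. g e * t e))) \<partial>PiM E (\<lambda>_. std_normal))"
    by (simp add: prod_ennreal exp_sum[symmetric] assms(1) sum_distrib_left algebra_simps)
  finally show ?thesis .
qed

lemma gaussian_exp_sum_squares:
  assumes "finite E" "0 \<le> b" "b < 1/2"
  shows "(\<integral>\<^sup>+g. ennreal (exp (b * (\<Sum>e\<in>E. (g e)\<^sup>2))) \<partial>PiM E (\<lambda>_. std_normal))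
    = ennreal ((1 / sqrt (1 - 2 * b)) ^ card E)"
proof -
  interpret product_prob_space "\<lambda>_. std_normal"
    by (simp add: product_prob_space_def product_prob_space_axioms_def product_sigma_finite_def
        prob_space_std_normal prob_space_imp_sigma_finite)
  have "(\<integral>\<^sup>+g. ennreal (exp (b * (\<Sum>e\<in>E. (g e)\<^sup>2))) \<partial>PiM E (\<lambda>_. std_normal))
      = (\<integral>\<^sup>+g. (\<Prod>e\<in>E. ennreal (exp (b * (g e)\<^sup>2))) \<partial>PiM E (\<lambda>_. std_normal))"
    by (simp add: prod_ennreal exp_sum[symmetric] assms(1) sum_distrib_left)
  also have "\<dots> = (\<Prod>e\<in>E. (\<integral>\<^sup>+x. ennreal (exp (b * x\<^sup>2)) \<partial>std_normal))"
    by (rule product_nn_integral_prod) (simp_all add: assms(1) borel_measurable_std_normal)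
  also have "\<dots> = ennreal ((1 / sqrt (1 - 2 * b)) ^ card E)"
    using assms by (simp add: std_normal_exp_square ennreal_power)
  finally show ?thesis .
qed

lemma borel_measurable_vinner [measurable]:
  "random_vec M n \<xi> \<Longrightarrow> (\<lambda>\<omega>. vinner n v (\<xi> \<omega>)) \<in> borel_measurable M"
  unfolding vinner_def random_vec_def by (intro borel_measurable_sum) auto

lemma subgaussian_random_vec: "subgaussian M n \<xi> K \<Longrightarrow> random_vec M n \<xi>"
  unfolding subgaussian_def by simp

lemma subgaussian_nn_mgf:
  assumes "subgaussian M n \<xi> K"
  shows "(\<integral>\<^sup>+\<omega>. ennreal (exp (vinner n l (\<xi> \<omega>))) \<partial>M) \<le> ennreal (exp (K\<^sup>2 * vnorm2 n l / 2))"
proof -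
  have "integrable M (\<lambda>\<omega>. exp (vinner n l (\<xi> \<omega>)))"
    and "(\<integral>\<omega>. exp (vinner n l (\<xi> \<omega>)) \<partial>M) \<le> exp (K\<^sup>2 * vnorm2 n l / 2)"
    using assms unfolding subgaussian_def by auto
  then show ?thesis by (simp add: nn_integral_eq_integral ennreal_leI)
qed

lemma subgaussian_nn_mgf_scaled:
  assumes "subgaussian M n \<xi> K"
  shows "(\<integral>\<^sup>+\<omega>. ennreal (exp (a * vinner n v (\<xi> \<omega>))) \<partial>M) \<le> ennreal (exp (K\<^sup>2 * a\<^sup>2 * vnorm2 n v / 2))"
  using subgaussian_nn_mgf[OF assms, of "\<lambda>i. a * v i"]
  by (simp add: vnorm2_def vinner_scale_left vinner_scale_right power2_eq_square mult_ac)

lemma subgaussian_nn_mgf_orthonormal_comb: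
  assumes "subgaussian M n \<xi> K" "finite E" "orthonormal n E"
  shows "(\<integral>\<^sup>+\<omega>. ennreal (exp (s * (\<Sum>e\<in>E. g e * vinner n e (\<xi> \<omega>)))) \<partial>M)
    \<le> ennreal (exp (K\<^sup>2 * s\<^sup>2 / 2 * (\<Sum>e\<in>E. (g e)\<^sup>2)))"
proof -
  let ?l = "\<lambda>i. \<Sum>e\<in>E. g e * e i"
  have "vinner n ?l (\<xi> \<omega>) = (\<Sum>e\<in>E. g e * vinner n e (\<xi> \<omega>))" for \<omega>
    unfolding vinner_scale_left vinner_sum_left by simp
  then show ?thesis
    using subgaussian_nn_mgf_scaled[OF assms(1), of s ?l] vnorm2_orthonormal_comb[OF assms(2,3), of g]
    by (simp add: mult_ac)
qed

text \<open>Linearise the square with an independent Gaussian vector \<open>g\<close>, apply the sub-Gaussian bound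
  in the direction \<open>\<Sum>e\<in>E. g e * e\<close>, and integrate \<open>g\<close> out by Tonelli.\<close>
lemma subgaussian_exp_quadratic_form:
  assumes M: "prob_space M" and sg: "subgaussian M n \<xi> K" and E: "finite E" "orthonormal n E"
    and c: "0 \<le> c" "2 * c * K\<^sup>2 < 1"
  shows "(\<integral>\<^sup>+\<omega>. ennreal (exp (c * (\<Sum>e\<in>E. (vinner n e (\<xi> \<omega>))\<^sup>2))) \<partial>M)
           \<le> ennreal ((1 / sqrt (1 - 2 * c * K\<^sup>2)) ^ card E)"
proof -
  define s where "s = sqrt (2 * c)"
  have s2: "s\<^sup>2 = 2 * c" unfolding s_def using c by simp
  define G where "G = PiM E (\<lambda>_. std_normal)"
  interpret G: prob_space G
    unfolding G_def by (rule prob_space_PiM) (rule prob_space_std_normal)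
  interpret pair_sigma_finite M G
    unfolding pair_sigma_finite_def
    using prob_space_imp_sigma_finite[OF M] G.sigma_finite_measure by auto
  have [measurable]: "(\<lambda>\<omega>. vinner n e (\<xi> \<omega>)) \<in> borel_measurable M" for e
    using subgaussian_random_vec[OF sg] by measurable
  have [measurable]: "(\<lambda>g. g e) \<in> borel_measurable G" if "e \<in> E" for e
    unfolding G_def using measurable_component_singleton[OF that, of "\<lambda>_. std_normal"]
    by (simp add: measurable_def)
  define F where "F = (\<lambda>\<omega> g. ennreal (exp (s * (\<Sum>e\<in>E. g e * vinner n e (\<xi> \<omega>)))))"
  have F_measurable: "case_prod F \<in> borel_measurable (M \<Otimes>\<^sub>M G)"
    unfolding F_def case_prod_beta' using E(1) by measurable
  have F_mgf: "(\<integral>\<^sup>+\<omega>. F \<omega> g \<partial>M) \<le> ennreal (exp ((c * K\<^sup>2) * (\<Sum>e\<in>E. (g e)\<^sup>2)))" for g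
    unfolding F_def using subgaussian_nn_mgf_orthonormal_comb[OF sg E, of s g] s2
    by (simp add: mult_ac)
  have "(\<integral>\<^sup>+\<omega>. ennreal (exp (c * (\<Sum>e\<in>E. (vinner n e (\<xi> \<omega>))\<^sup>2))) \<partial>M)
      = (\<integral>\<^sup>+\<omega>. (\<integral>\<^sup>+g. F \<omega> g \<partial>G) \<partial>M)"
    unfolding F_def G_def using exp_sum_squares_gaussian[OF E(1) s2] by simp
  also have "\<dots> = (\<integral>\<^sup>+g. (\<integral>\<^sup>+\<omega>. F \<omega> g \<partial>M) \<partial>G)"
    by (rule Fubini'[OF F_measurable, symmetric])
  also have "\<dots> \<le> (\<integral>\<^sup>+g. ennreal (exp ((c * K\<^sup>2) * (\<Sum>e\<in>E. (g e)\<^sup>2))) \<partial>G)"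
    by (intro nn_integral_mono F_mgf)
  also have "\<dots> = ennreal ((1 / sqrt (1 - 2 * c * K\<^sup>2)) ^ card E)"
    unfolding G_def using c by (subst gaussian_exp_sum_squares[OF E(1)]) (auto simp: mult.assoc)
  finally show ?thesis .
qed

section \<open>Models and elementary estimates\<close>

lemma finite_models: "finite (models p u)"
  unfolding models_def by (rule finite_subset[of _ "Pow {0..<p}"]) auto

lemma finite_mem_models: "m \<in> models p u \<Longrightarrow> finite m"
  unfolding models_def by (auto intro: finite_subset)

lemma card_models_le_exp: "real (card (models p u)) \<le> exp (real u * ln (real p))"
proof -
  have "card (models p u) = p choose u"
    unfolding models_def using n_subsets[of "{0..<p}" u] by simp
  also have "\<dots> \<le> p ^ u"
    by (cases "u \<le> p") (auto simp: binomial_le_pow binomial_eq_0)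
  finally have "real (card (models p u)) \<le> real p ^ u" by (simp flip: of_nat_power)
  also have "\<dots> \<le> exp (real u * ln (real p))"
  proof (cases "p = 0")
    case True
    then show ?thesis by (cases u) simp_all
  next
    case False
    then have "real p ^ u = exp (ln (real p)) ^ u" by simp
    then show ?thesis by (simp add: exp_of_nat_mult)
  qed
  finally show ?thesis .
qed

lemma ln_card_models_le: "ln (real (card (models p u)) + 1) \<le> real u * ln (real p) + 1"
proof -
  have "0 \<le> real u * ln (real p)" by (cases "p = 0") auto
  then have "real (card (models p u)) + 1 \<le> 2 * exp (real u * ln (real p))"
    using card_models_le_exp[of p u] by (smt (verit) one_le_exp_iff)
  then have "ln (real (card (models p u)) + 1) \<le> ln (2 * exp (real u * ln (real p)))"
    by (subst ln_le_cancel_iff) auto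
  also have "\<dots> = ln 2 + real u * ln (real p)" by (simp add: ln_mult)
  finally show ?thesis using ln_2_less_1 by simp
qed

lemma models_extend:
  assumes "S \<in> models p s" "s \<le> u" "u \<le> p"
  obtains S' where "S \<subseteq> S'" "S' \<in> models p u"
proof -
  have S: "S \<subseteq> {0..<p}" "card S = s" "finite S"
    using assms(1) finite_mem_models[OF assms(1)] unfolding models_def by auto
  have "u - s \<le> card ({0..<p} - S)" using S assms(3) by (simp add: card_Diff_subset)
  then obtain T where T: "T \<subseteq> {0..<p} - S" "card T = u - s" "finite T"
    by (rule obtain_subset_with_card_n)
  have "card (S \<union> T) = u" using T S assms(2) by (subst card_Un_disjoint) auto
  then have "S \<union> T \<in> models p u" using T S unfolding models_def by auto
  then show ?thesis by (intro that[of "S \<union> T"]) auto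
qed

lemma models_empty: "p < u \<Longrightarrow> models p u = {}"
  unfolding models_def by (auto dest!: card_mono[OF finite_atLeastLessThan])

lemma amgm_weighted:
  fixes x y \<theta> :: real
  assumes "\<theta> > 0"
  shows "x * y \<le> (\<theta> * x\<^sup>2 + y\<^sup>2 / \<theta>) / 2"
proof -
  have "0 \<le> (\<theta> * x - y)\<^sup>2 / \<theta>" using assms by simp
  also have "\<dots> = \<theta> * x\<^sup>2 - 2 * x * y + y\<^sup>2 / \<theta>"
    using assms by (simp add: power2_eq_square field_simps)
  finally show ?thesis by simp
qed

text \<open>The maximum of \<open>y \<mapsto> y * exp (- y)\<close> is below \<open>1\<close>; half of the exponent pays for the factor \<open>a\<close>.\<close>
lemma mult_exp_neg_le:
  fixes a t c \<alpha> R :: real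
  assumes "t \<le> a" "0 \<le> t" "c > 0" "\<alpha> > 0"
  shows "a * exp (R - c / \<alpha> * a) \<le> (2 * \<alpha> / c) * exp (R - c / (2 * \<alpha>) * t)"
proof -
  define y where "y = c / (2 * \<alpha>) * a"
  have "y \<le> exp y" using exp_ge_add_one_self[of y] by linarith
  then have ye: "y * exp (- y) \<le> 1" by (simp add: exp_minus field_simps)
  have "c / (2 * \<alpha>) * t \<le> y"
    unfolding y_def using assms by (intro mult_left_mono) auto
  then have exp_le: "exp (R - y) \<le> exp (R - c / (2 * \<alpha>) * t)" by simp
  have "a * exp (R - c / \<alpha> * a) = (2 * \<alpha> / c) * (y * exp (- y)) * exp (R - y)"
    unfolding y_def using assms by (simp add: mult_exp_exp field_simps)
  also have "\<dots> \<le> (2 * \<alpha> / c) * 1 * exp (R - c / (2 * \<alpha>) * t)"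
    using ye exp_le assms by (intro mult_mono mult_left_mono) auto
  finally show ?thesis by simp
qed

lemma nn_integral_sum_le:
  assumes "finite T" "\<And>m. m \<in> T \<Longrightarrow> g m \<in> borel_measurable M"
    "\<And>m. m \<in> T \<Longrightarrow> 0 \<le> c m" "\<And>m \<omega>. m \<in> T \<Longrightarrow> 0 \<le> g m \<omega>"
    "\<And>m. m \<in> T \<Longrightarrow> (\<integral>\<^sup>+\<omega>. ennreal (g m \<omega>) \<partial>M) \<le> ennreal (r m)"
    "\<And>m. m \<in> T \<Longrightarrow> 0 \<le> r m"
  shows "(\<integral>\<^sup>+\<omega>. ennreal (\<Sum>m\<in>T. c m * g m \<omega>) \<partial>M) \<le> ennreal (\<Sum>m\<in>T. c m * r m)"
proof -
  have "(\<integral>\<^sup>+\<omega>. ennreal (\<Sum>m\<in>T. c m * g m \<omega>) \<partial>M)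
      = (\<integral>\<^sup>+\<omega>. (\<Sum>m\<in>T. ennreal (c m) * ennreal (g m \<omega>)) \<partial>M)"
    using assms(3,4) by (intro nn_integral_cong) (simp add: sum_ennreal[symmetric] ennreal_mult)
  also have "\<dots> = (\<Sum>m\<in>T. ennreal (c m) * (\<integral>\<^sup>+\<omega>. ennreal (g m \<omega>) \<partial>M))"
    using assms(2) by (simp add: nn_integral_sum nn_integral_cmult)
  also have "\<dots> \<le> (\<Sum>m\<in>T. ennreal (c m) * ennreal (r m))"
    using assms(5) by (intro sum_mono mult_left_mono) auto
  also have "\<dots> = ennreal (\<Sum>m\<in>T. c m * r m)"
    using assms(3,6) by (simp add: sum_ennreal[symmetric] ennreal_mult)
  finally show ?thesis .
qed

lemma nn_integral_lincomb_le:
  assumes "f \<in> borel_measurable M" "g \<in> borel_measurable M" "\<And>\<omega>. 0 \<le> f \<omega>" "\<And>\<omega>. 0 \<le> g \<omega>"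
    "0 \<le> a" "0 \<le> b" "0 \<le> X" "0 \<le> Y"
    "(\<integral>\<^sup>+\<omega>. ennreal (f \<omega>) \<partial>M) \<le> ennreal X" "(\<integral>\<^sup>+\<omega>. ennreal (g \<omega>) \<partial>M) \<le> ennreal Y"
  shows "(\<integral>\<^sup>+\<omega>. ennreal (a * f \<omega> + b * g \<omega>) \<partial>M) \<le> ennreal (a * X + b * Y)"
proof -
  have "(\<integral>\<^sup>+\<omega>. ennreal (a * f \<omega> + b * g \<omega>) \<partial>M)
      = (\<integral>\<^sup>+\<omega>. ennreal a * ennreal (f \<omega>) + ennreal b * ennreal (g \<omega>) \<partial>M)"
    using assms(3-6) by (intro nn_integral_cong) (simp add: ennreal_mult)
  also have "\<dots> = ennreal a * (\<integral>\<^sup>+\<omega>. ennreal (f \<omega>) \<partial>M) + ennreal b * (\<integral>\<^sup>+\<omega>. ennreal (g \<omega>) \<partial>M)"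
    using assms(1,2) by (simp add: nn_integral_add nn_integral_cmult)
  also have "\<dots> \<le> ennreal a * ennreal X + ennreal b * ennreal Y"
    using assms(9,10) by (intro add_mono mult_left_mono) auto
  also have "\<dots> = ennreal (a * X + b * Y)"
    using assms(5-8) by (simp add: ennreal_mult)
  finally show ?thesis .
qed

text \<open>A substitute for the Cauchy--Schwarz inequality \<open>E (e\<^sup>f e\<^sup>g) \<le> (E e\<^sup>2\<^sup>f E e\<^sup>2\<^sup>g)\<^sup>1\<^sup>/\<^sup>2\<close>,
  obtained from the weighted AM-GM inequality with the optimal weight.\<close>
lemma nn_integral_exp_add_le:
  assumes "f \<in> borel_measurable M" "g \<in> borel_measurable M"
    "(\<integral>\<^sup>+x. ennreal (exp (2 * f x)) \<partial>M) \<le> ennreal (exp a)"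
    "(\<integral>\<^sup>+x. ennreal (exp (2 * g x)) \<partial>M) \<le> ennreal (exp b)"
  shows "(\<integral>\<^sup>+x. ennreal (exp (f x + g x)) \<partial>M) \<le> ennreal (exp ((a + b) / 2))"
proof -
  define \<theta> where "\<theta> = exp ((b - a) / 2)"
  have \<theta>: "\<theta> > 0" unfolding \<theta>_def by simp
  have "exp (f x + g x) \<le> \<theta> / 2 * exp (2 * f x) + 1 / (2 * \<theta>) * exp (2 * g x)" for x
  proof -
    have "exp (f x + g x) = exp (f x) * exp (g x)" by (rule exp_add)
    also have "\<dots> \<le> (\<theta> * (exp (f x))\<^sup>2 + (exp (g x))\<^sup>2 / \<theta>) / 2" by (rule amgm_weighted[OF \<theta>])
    finally show ?thesis by (simp add: power2_eq_square mult_exp_exp field_simps)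
  qed
  then have "(\<integral>\<^sup>+x. ennreal (exp (f x + g x)) \<partial>M)
      \<le> (\<integral>\<^sup>+x. ennreal (\<theta> / 2 * exp (2 * f x) + 1 / (2 * \<theta>) * exp (2 * g x)) \<partial>M)"
    by (intro nn_integral_mono ennreal_leI)
  also have "\<dots> \<le> ennreal (\<theta> / 2 * exp a + 1 / (2 * \<theta>) * exp b)"
    using assms \<theta> by (intro nn_integral_lincomb_le) auto
  also have "\<theta> / 2 * exp a + 1 / (2 * \<theta>) * exp b = exp ((a + b) / 2)"
    unfolding \<theta>_def by (simp add: field_simps flip: exp_add exp_diff)
  finally show ?thesis .
qed

section \<open>Expected exponential weights for a fixed sample size\<close>

definition noise_level :: "real \<Rightarrow> real \<Rightarrow> real" where
  "noise_level K \<alpha> = 4 * K\<^sup>2 / \<alpha>"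

text \<open>With \<open>\<beta> = noise_level K \<alpha>\<close> and \<open>\<eta> = (1 - \<beta>) / 2\<close>, \<open>decay_rate = 1 - \<beta> (1 + \<eta>)\<close> and
  \<open>growth_rate = 1 + \<beta> (1 + 1 / \<eta>)\<close> are the coefficients produced by splitting
  \<open>\<parallel>P\<^sub>m\<^sup>\<bottom>\<mu> - P\<^sub>S\<^sup>\<bottom>\<mu>\<parallel>\<^sup>2 \<le> (1 + \<eta>) \<parallel>P\<^sub>m\<^sup>\<bottom>\<mu>\<parallel>\<^sup>2 + (1 + 1 / \<eta>) \<parallel>P\<^sub>S\<^sup>\<bottom>\<mu>\<parallel>\<^sup>2\<close>;
  \<open>dim_rate\<close> is the cost per dimension of the chi-square moment generating function.\<close>
definition decay_rate :: "real \<Rightarrow> real \<Rightarrow> real" where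
  "decay_rate K \<alpha> = (1 - noise_level K \<alpha>) * (2 - noise_level K \<alpha>) / 2"

definition growth_rate :: "real \<Rightarrow> real \<Rightarrow> real" where
  "growth_rate K \<alpha> = 1 + noise_level K \<alpha> * (3 - noise_level K \<alpha>) / (1 - noise_level K \<alpha>)"

definition dim_rate :: "real \<Rightarrow> real \<Rightarrow> real" where
  "dim_rate K \<alpha> = - ln (1 - noise_level K \<alpha>) / 4"

lemma pos_of_gt_four_sq: "\<alpha> > 4 * K\<^sup>2 \<Longrightarrow> \<alpha> > (0::real)"
  by (smt (verit) zero_le_power2)

lemma noise_level_bounds:
  assumes "\<alpha> > 4 * K\<^sup>2"
  shows "0 \<le> noise_level K \<alpha>" "noise_level K \<alpha> < 1"
  using assms pos_of_gt_four_sq[OF assms] unfolding noise_level_def by auto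

lemma decay_rate_pos: "\<alpha> > 4 * K\<^sup>2 \<Longrightarrow> decay_rate K \<alpha> > 0"
  using noise_level_bounds[of K \<alpha>] unfolding decay_rate_def by simp

lemma growth_rate_pos: "\<alpha> > 4 * K\<^sup>2 \<Longrightarrow> growth_rate K \<alpha> > 0"
  using noise_level_bounds[of K \<alpha>] unfolding growth_rate_def by (simp add: add_pos_nonneg)

locale exponential_weights =
  fixes n p u :: nat and Z :: "nat \<Rightarrow> nat \<Rightarrow> real" and \<alpha> K :: real
    and \<mu> :: "nat \<Rightarrow> real" and M :: "'a measure" and \<xi> :: "'a \<Rightarrow> nat \<Rightarrow> real"
  assumes prob_space: "prob_space M" and noise: "subgaussian M n \<xi> K" and alpha: "\<alpha> > 4 * K\<^sup>2"
begin

abbreviation "\<beta> \<equiv> noise_level K \<alpha>"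
abbreviation "c1 \<equiv> decay_rate K \<alpha>"
abbreviation "c2 \<equiv> growth_rate K \<alpha>"
abbreviation "L \<equiv> dim_rate K \<alpha>"

definition err :: "nat set \<Rightarrow> real" where
  "err m = vnorm2 n (projperp n Z m \<mu>)"

definition rss :: "nat set \<Rightarrow> 'a \<Rightarrow> real" where
  "rss m \<omega> = vnorm2 n (projperp n Z m (\<lambda>i. \<mu> i + \<xi> \<omega> i))"

definition weight :: "nat set \<Rightarrow> 'a \<Rightarrow> real" where
  "weight m \<omega> = expweight n p Z u \<alpha> (\<lambda>i. \<mu> i + \<xi> \<omega> i) m"

definition noise_proj :: "nat set \<Rightarrow> (nat \<Rightarrow> real) \<Rightarrow> real" where
  "noise_proj m x = (\<Sum>e\<in>onb n Z m. (vinner n e x)\<^sup>2)"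

text \<open>This is \<open>exp (- (rss m - rss S) / \<alpha>)\<close> with both residual sums of squares expanded and the
  term \<open>\<parallel>P\<^sub>S \<xi>\<parallel>\<^sup>2 \<ge> 0\<close> dropped.\<close>
definition weight_bound :: "nat set \<Rightarrow> nat set \<Rightarrow> 'a \<Rightarrow> real" where
  "weight_bound S m \<omega> = exp (- (err m - err S) / \<alpha>
     - 2 / \<alpha> * vinner n (\<lambda>i. projperp n Z m \<mu> i - projperp n Z S \<mu> i) (\<xi> \<omega>)
     + noise_proj m (\<xi> \<omega>) / \<alpha>)"

definition err_dominator :: "nat set \<Rightarrow> real \<Rightarrow> 'a \<Rightarrow> real" where
  "err_dominator S t \<omega> = t + (\<Sum>m\<in>{m\<in>models p u. t < err m}. err m * weight_bound S m \<omega>)"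

lemma alpha_pos: "\<alpha> > 0"
  by (rule pos_of_gt_four_sq[OF alpha])

lemma err_nonneg: "err m \<ge> 0"
  unfolding err_def by (rule vnorm2_nonneg)

lemma noise_proj_nonneg: "noise_proj m x \<ge> 0"
  unfolding noise_proj_def by (intro sum_nonneg) auto

lemma weight_bound_pos: "weight_bound S m \<omega> > 0"
  unfolding weight_bound_def by simp

lemma err_dominator_nonneg: "0 \<le> t \<Longrightarrow> 0 \<le> err_dominator S t \<omega>"
  unfolding err_dominator_def
  by (intro add_nonneg_nonneg sum_nonneg mult_nonneg_nonneg err_nonneg less_imp_le[OF weight_bound_pos])

lemma borel_measurable_noise_vinner [measurable]: "(\<lambda>\<omega>. vinner n v (\<xi> \<omega>)) \<in> borel_measurable M"
  using subgaussian_random_vec[OF noise] by measurable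

lemma borel_measurable_weight_bound [measurable]:
  "(\<lambda>\<omega>. weight_bound S m \<omega>) \<in> borel_measurable M"
  unfolding weight_bound_def noise_proj_def by measurable

lemma borel_measurable_err_dominator [measurable]:
  "(\<lambda>\<omega>. err_dominator S t \<omega>) \<in> borel_measurable M"
  unfolding err_dominator_def weight_bound_def noise_proj_def by measurable

lemma rss_eq:
  assumes "finite m"
  shows "rss m \<omega> = err m + 2 * vinner n (projperp n Z m \<mu>) (\<xi> \<omega>) + vnorm2 n (\<xi> \<omega>) - noise_proj m (\<xi> \<omega>)"
proof -
  let ?E = "onb n Z m"
  have E: "orthonormal_basis n Z m ?E" by (rule orthonormal_basis_onb[OF assms])
  have "rss m \<omega> = vnorm2 n (\<lambda>i. \<mu> i + \<xi> \<omega> i) - (\<Sum>e\<in>?E. (vinner n e (\<lambda>i. \<mu> i + \<xi> \<omega> i))\<^sup>2)"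
    unfolding rss_def by (rule vnorm2_projperp[OF E])
  also have "(\<Sum>e\<in>?E. (vinner n e (\<lambda>i. \<mu> i + \<xi> \<omega> i))\<^sup>2)
     = (\<Sum>e\<in>?E. (vinner n e \<mu>)\<^sup>2) + 2 * (\<Sum>e\<in>?E. vinner n e \<mu> * vinner n e (\<xi> \<omega>)) + noise_proj m (\<xi> \<omega>)"
    unfolding noise_proj_def vinner_add_right
    by (simp add: power2_sum sum.distrib sum_distrib_left algebra_simps)
  also have "err m = vnorm2 n \<mu> - (\<Sum>e\<in>?E. (vinner n e \<mu>)\<^sup>2)"
    unfolding err_def by (rule vnorm2_projperp[OF E])
  moreover have "vinner n (projperp n Z m \<mu>) (\<xi> \<omega>)
      = vinner n \<mu> (\<xi> \<omega>) - (\<Sum>e\<in>?E. vinner n e \<mu> * vinner n e (\<xi> \<omega>))"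
    by (rule vinner_projperp_left[OF E])
  ultimately show ?thesis by (simp add: vnorm2_add)
qed

lemma weight_nonneg: "weight m \<omega> \<ge> 0"
  unfolding weight_def expweight_def by (intro divide_nonneg_nonneg sum_nonneg) auto

lemma weight_eq: "weight m \<omega> = exp (- rss m \<omega> / \<alpha>) / (\<Sum>k\<in>models p u. exp (- rss k \<omega> / \<alpha>))"
  unfolding weight_def expweight_def rss_def ..

lemma sum_exp_rss_ge:
  assumes "S \<in> models p u"
  shows "(\<Sum>k\<in>models p u. exp (- rss k \<omega> / \<alpha>)) \<ge> exp (- rss S \<omega> / \<alpha>)"
  using assms finite_models by (intro member_le_sum) auto

lemma sum_weight:
  assumes "S \<in> models p u"
  shows "(\<Sum>m\<in>models p u. weight m \<omega>) = 1"
proof -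
  have "(\<Sum>k\<in>models p u. exp (- rss k \<omega> / \<alpha>)) > 0"
    using sum_exp_rss_ge[OF assms, of \<omega>] by (smt (verit) exp_gt_zero)
  then show ?thesis unfolding weight_eq sum_divide_distrib[symmetric] by simp
qed

lemma weight_le_exp_rss_diff:
  assumes "S \<in> models p u"
  shows "weight m \<omega> \<le> exp (- (rss m \<omega> - rss S \<omega>) / \<alpha>)"
proof -
  have "weight m \<omega> \<le> exp (- rss m \<omega> / \<alpha>) / exp (- rss S \<omega> / \<alpha>)"
    unfolding weight_eq using sum_exp_rss_ge[OF assms, of \<omega>]
    by (intro divide_left_mono) (auto intro: mult_pos_pos order.strict_trans2[OF exp_gt_zero])
  also have "\<dots> = exp (- (rss m \<omega> - rss S \<omega>) / \<alpha>)"
    by (simp add: exp_diff[symmetric] diff_divide_distrib)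
  finally show ?thesis .
qed

lemma weight_le_weight_bound:
  assumes "S \<in> models p u" "m \<in> models p u"
  shows "weight m \<omega> \<le> weight_bound S m \<omega>"
proof -
  let ?v = "\<lambda>i. projperp n Z m \<mu> i - projperp n Z S \<mu> i"
  have "rss m \<omega> - rss S \<omega> \<ge> err m - err S + 2 * vinner n ?v (\<xi> \<omega>) - noise_proj m (\<xi> \<omega>)"
    using rss_eq[OF finite_mem_models[OF assms(1)], of \<omega>] rss_eq[OF finite_mem_models[OF assms(2)], of \<omega>]
      noise_proj_nonneg[of S "\<xi> \<omega>"]
    by (simp add: vinner_diff_left)
  then have "- (rss m \<omega> - rss S \<omega>) / \<alpha>
      \<le> - (err m - err S + 2 * vinner n ?v (\<xi> \<omega>) - noise_proj m (\<xi> \<omega>)) / \<alpha>"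
    using alpha_pos by (intro divide_right_mono) auto
  also have "\<dots> = - (err m - err S) / \<alpha> - 2 / \<alpha> * vinner n ?v (\<xi> \<omega>) + noise_proj m (\<xi> \<omega>) / \<alpha>"
    by (simp add: diff_divide_distrib add_divide_distrib)
  finally have "exp (- (rss m \<omega> - rss S \<omega>) / \<alpha>) \<le> weight_bound S m \<omega>"
    unfolding weight_bound_def by simp
  then show ?thesis using weight_le_exp_rss_diff[OF assms(1), of m \<omega>] by linarith
qed

text \<open>Models with error at most \<open>t\<close> contribute at most \<open>t\<close> in total, since the weights sum to one.\<close>
lemma weighted_err_le_dominator:
  assumes "S \<in> models p u" "0 \<le> t"
  shows "(\<Sum>m\<in>models p u. weight m \<omega> * err m) \<le> err_dominator S t \<omega>"
proof -
  have "weight m \<omega> * err m \<le> t * weight m \<omega> + (if t < err m then err m * weight_bound S m \<omega> else 0)"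
    if "m \<in> models p u" for m
  proof (cases "t < err m")
    case True
    have "weight m \<omega> * err m \<le> weight_bound S m \<omega> * err m"
      using weight_le_weight_bound[OF assms(1) that] err_nonneg by (intro mult_right_mono) auto
    moreover have "0 \<le> t * weight m \<omega>" using assms(2) weight_nonneg by simp
    ultimately show ?thesis using True by (simp only: if_True mult.commute[of "err m"])
  next
    case False
    then show ?thesis using weight_nonneg[of m \<omega>] by (simp add: mult.commute mult_right_mono)
  qed
  then have "(\<Sum>m\<in>models p u. weight m \<omega> * err m)
      \<le> (\<Sum>m\<in>models p u. t * weight m \<omega> + (if t < err m then err m * weight_bound S m \<omega> else 0))"
    by (rule sum_mono)
  also have "\<dots> = err_dominator S t \<omega>"
    unfolding err_dominator_def
    by (simp add: sum.distrib sum_distrib_left[symmetric] sum_weight[OF assms(1)]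
        sum.inter_filter[OF finite_models])
  finally show ?thesis .
qed

lemma nn_integral_exp_noise_proj:
  assumes "m \<in> models p u"
  shows "(\<integral>\<^sup>+\<omega>. ennreal (exp (2 * (noise_proj m (\<xi> \<omega>) / \<alpha>))) \<partial>M) \<le> ennreal (exp (u * (2 * L)))"
proof -
  let ?E = "onb n Z m"
  have E: "finite ?E" "card ?E \<le> u" "orthonormal n ?E"
    using orthonormal_basis_onb[OF finite_mem_models[OF assms], of n Z] assms
    unfolding orthonormal_basis_def models_def by auto
  have \<beta>: "0 \<le> \<beta>" "\<beta> < 1" using noise_level_bounds[OF alpha] by auto
  have "2 * (2 / \<alpha>) * K\<^sup>2 = \<beta>" unfolding noise_level_def by simp
  then have "(\<integral>\<^sup>+\<omega>. ennreal (exp (2 / \<alpha> * noise_proj m (\<xi> \<omega>))) \<partial>M)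
      \<le> ennreal ((1 / sqrt (1 - \<beta>)) ^ card ?E)"
    using subgaussian_exp_quadratic_form[OF prob_space noise E(1,3), of "2 / \<alpha>"] alpha_pos \<beta>
    unfolding noise_proj_def by auto
  also have "(1 / sqrt (1 - \<beta>)) ^ card ?E \<le> (1 / sqrt (1 - \<beta>)) ^ u"
    using \<beta> E(2) by (intro power_increasing) (auto simp: real_sqrt_le_1_iff)
  also have "(1 / sqrt (1 - \<beta>)) ^ u = exp (u * (2 * L))"
  proof -
    have "2 * L = - ln (sqrt (1 - \<beta>))" using \<beta> by (simp add: dim_rate_def ln_sqrt)
    then have "exp (2 * L) = 1 / sqrt (1 - \<beta>)" using \<beta> by (simp add: exp_minus inverse_eq_divide)
    then show ?thesis by (simp add: exp_of_nat_mult)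
  qed
  finally show ?thesis by (simp add: ennreal_leI mult.commute)
qed

lemma weight_exponent_le:
  "(err S - err m) / \<alpha> + (u * (2 * L) + 8 * K\<^sup>2 * vnorm2 n (\<lambda>i. projperp n Z m \<mu> i - projperp n Z S \<mu> i) / \<alpha>\<^sup>2) / 2
    \<le> c2 * err S / \<alpha> + u * L - c1 / \<alpha> * err m"
proof -
  define \<eta> where "\<eta> = (1 - \<beta>) / 2"
  have \<beta>: "0 \<le> \<beta>" "\<beta> < 1" using noise_level_bounds[OF alpha] by auto
  then have \<eta>: "\<eta> > 0" unfolding \<eta>_def by simp
  have "8 * K\<^sup>2 * vnorm2 n (\<lambda>i. projperp n Z m \<mu> i - projperp n Z S \<mu> i) / \<alpha>\<^sup>2 / 2
      = \<beta> / \<alpha> * vnorm2 n (\<lambda>i. projperp n Z m \<mu> i - projperp n Z S \<mu> i)"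
    unfolding noise_level_def by (simp add: power2_eq_square field_simps)
  also have "\<dots> \<le> \<beta> / \<alpha> * ((1 + \<eta>) * err m + (1 + 1 / \<eta>) * err S)"
    using vnorm2_diff_le[OF \<eta>] \<beta> alpha_pos unfolding err_def by (intro mult_left_mono) auto
  finally have "(err S - err m) / \<alpha>
      + (u * (2 * L) + 8 * K\<^sup>2 * vnorm2 n (\<lambda>i. projperp n Z m \<mu> i - projperp n Z S \<mu> i) / \<alpha>\<^sup>2) / 2
      \<le> (err S - err m) / \<alpha> + u * L + \<beta> / \<alpha> * ((1 + \<eta>) * err m + (1 + 1 / \<eta>) * err S)"
    by (simp add: add_divide_distrib)
  also have "\<dots> = c2 * err S / \<alpha> + u * L - c1 / \<alpha> * err m"
  proof -
    have c1_eq: "c1 = 1 - \<beta> * (1 + \<eta>)" unfolding decay_rate_def \<eta>_def by (simp add: field_simps)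
    have c2_eq: "c2 = 1 + \<beta> * (1 + 1 / \<eta>)"
      using \<beta> unfolding growth_rate_def \<eta>_def by (simp add: field_simps)
    show ?thesis using alpha_pos \<eta> unfolding c1_eq c2_eq by (simp add: field_simps)
  qed
  finally show ?thesis .
qed

lemma nn_integral_weight_bound:
  assumes "S \<in> models p u" "m \<in> models p u"
  shows "(\<integral>\<^sup>+\<omega>. ennreal (weight_bound S m \<omega>) \<partial>M)
    \<le> ennreal (exp (c2 * err S / \<alpha> + u * L - c1 / \<alpha> * err m))"
proof -
  define v where "v = (\<lambda>i. projperp n Z m \<mu> i - projperp n Z S \<mu> i)"
  define A where "A = (\<lambda>\<omega>. noise_proj m (\<xi> \<omega>) / \<alpha>)"
  define B where "B = (\<lambda>\<omega>. - 2 / \<alpha> * vinner n v (\<xi> \<omega>))"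
  define X where "X = (u * (2 * L) + 8 * K\<^sup>2 * vnorm2 n v / \<alpha>\<^sup>2) / 2"
  have A_measurable: "A \<in> borel_measurable M" and B_measurable: "B \<in> borel_measurable M"
    unfolding A_def B_def noise_proj_def by measurable
  have A_int: "(\<integral>\<^sup>+\<omega>. ennreal (exp (2 * A \<omega>)) \<partial>M) \<le> ennreal (exp (u * (2 * L)))"
    unfolding A_def by (rule nn_integral_exp_noise_proj[OF assms(2)])
  have B_int: "(\<integral>\<^sup>+\<omega>. ennreal (exp (2 * B \<omega>)) \<partial>M) \<le> ennreal (exp (8 * K\<^sup>2 * vnorm2 n v / \<alpha>\<^sup>2))"
    using subgaussian_nn_mgf_scaled[OF noise, of "- 4 / \<alpha>" v] unfolding B_def
    by (simp add: power2_eq_square mult_ac)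
  have "weight_bound S m \<omega> = exp ((err S - err m) / \<alpha>) * exp (A \<omega> + B \<omega>)" for \<omega>
    unfolding weight_bound_def A_def B_def v_def mult_exp_exp by (simp add: algebra_simps)
  then have "(\<integral>\<^sup>+\<omega>. ennreal (weight_bound S m \<omega>) \<partial>M)
      = ennreal (exp ((err S - err m) / \<alpha>)) * (\<integral>\<^sup>+\<omega>. ennreal (exp (A \<omega> + B \<omega>)) \<partial>M)"
    using A_measurable B_measurable by (simp add: ennreal_mult nn_integral_cmult)
  also have "\<dots> \<le> ennreal (exp ((err S - err m) / \<alpha>)) * ennreal (exp X)"
    unfolding X_def by (intro mult_left_mono nn_integral_exp_add_le[OF A_measurable B_measurable A_int B_int]) simp
  also have "\<dots> = ennreal (exp ((err S - err m) / \<alpha> + X))"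
    by (simp add: exp_add ennreal_mult)
  also have "\<dots> \<le> ennreal (exp (c2 * err S / \<alpha> + u * L - c1 / \<alpha> * err m))"
    using weight_exponent_le[of S m] unfolding X_def v_def by (intro ennreal_leI) simp
  finally show ?thesis .
qed

lemma nn_integral_large_err_le:
  assumes "S \<in> models p u" "0 \<le> t" "err S \<le> r"
  shows "(\<integral>\<^sup>+\<omega>. ennreal (\<Sum>m\<in>{m\<in>models p u. t < err m}. err m * weight_bound S m \<omega>) \<partial>M)
    \<le> ennreal (exp (u * ln p) * (2 * \<alpha> / c1 * exp (c2 * r / \<alpha> + u * L - c1 / (2 * \<alpha>) * t)))"
proof -
  define T where "T = {m\<in>models p u. t < err m}"
  define R where "R = c2 * r / \<alpha> + u * L"
  have T: "finite T" "T \<subseteq> models p u" unfolding T_def using finite_models by auto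
  define D where "D = 2 * \<alpha> / c1 * exp (R - c1 / (2 * \<alpha>) * t)"
  have c1: "c1 > 0" by (rule decay_rate_pos[OF alpha])
  have D_nonneg: "0 \<le> D" unfolding D_def using c1 alpha_pos by simp
  have "c2 * err S / \<alpha> \<le> c2 * r / \<alpha>"
    using assms(3) growth_rate_pos[OF alpha] alpha_pos by (intro divide_right_mono mult_left_mono) auto
  then have bound: "(\<integral>\<^sup>+\<omega>. ennreal (weight_bound S m \<omega>) \<partial>M) \<le> ennreal (exp (R - c1 / \<alpha> * err m))"
    if "m \<in> T" for m
  proof -
    have "(\<integral>\<^sup>+\<omega>. ennreal (weight_bound S m \<omega>) \<partial>M) \<le> ennreal (exp (c2 * err S / \<alpha> + u * L - c1 / \<alpha> * err m))"
      using nn_integral_weight_bound[OF assms(1)] that T(2) by blast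
    also have "\<dots> \<le> ennreal (exp (R - c1 / \<alpha> * err m))"
      using \<open>c2 * err S / \<alpha> \<le> c2 * r / \<alpha>\<close> unfolding R_def by (intro ennreal_leI) simp
    finally show ?thesis .
  qed
  have "(\<integral>\<^sup>+\<omega>. ennreal (\<Sum>m\<in>T. err m * weight_bound S m \<omega>) \<partial>M)
      \<le> ennreal (\<Sum>m\<in>T. err m * exp (R - c1 / \<alpha> * err m))"
    by (rule nn_integral_sum_le[OF T(1) _ _ _ bound])
      (simp_all add: err_nonneg less_imp_le[OF weight_bound_pos])
  also have "\<dots> \<le> ennreal (\<Sum>m\<in>T. D)"
    unfolding D_def using assms(2) c1 alpha_pos
    by (intro ennreal_leI sum_mono mult_exp_neg_le) (auto simp: T_def)
  also have "\<dots> \<le> ennreal (exp (u * ln p) * D)"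
    using card_mono[OF finite_models T(2)] card_models_le_exp[of p u] D_nonneg
    by (intro ennreal_leI) (simp add: mult_right_mono order_trans)
  finally show ?thesis unfolding T_def D_def R_def .
qed

lemma nn_integral_err_dominator:
  assumes "S \<in> models p u" "0 \<le> t" "err S \<le> r"
  shows "(\<integral>\<^sup>+\<omega>. ennreal (err_dominator S t \<omega>) \<partial>M)
    \<le> ennreal (t + 2 * \<alpha> / c1 * exp (u * ln p + c2 * r / \<alpha> + u * L - c1 / (2 * \<alpha>) * t))"
proof -
  interpret prob_space M by (rule prob_space)
  have "(\<integral>\<^sup>+\<omega>. ennreal (err_dominator S t \<omega>) \<partial>M)
      = ennreal t + (\<integral>\<^sup>+\<omega>. ennreal (\<Sum>m\<in>{m\<in>models p u. t < err m}. err m * weight_bound S m \<omega>) \<partial>M)"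
    unfolding err_dominator_def using assms(2)
    by (subst ennreal_plus) (auto intro!: sum_nonneg mult_nonneg_nonneg err_nonneg
        less_imp_le[OF weight_bound_pos] simp: nn_integral_add emeasure_space_1)
  also have "\<dots> \<le> ennreal t
      + ennreal (exp (u * ln p) * (2 * \<alpha> / c1 * exp (c2 * r / \<alpha> + u * L - c1 / (2 * \<alpha>) * t)))"
    by (rule add_left_mono[OF nn_integral_large_err_le[OF assms]])
  also have "\<dots> = ennreal (t + 2 * \<alpha> / c1 * exp (u * ln p + c2 * r / \<alpha> + u * L - c1 / (2 * \<alpha>) * t))"
    using assms(2) decay_rate_pos[OF alpha] alpha_pos by (simp add: mult_exp_exp add.assoc mult_ac)
  finally show ?thesis .
qed

end

locale exponential_weights_cross = exponential_weights +
  fixes \<zeta> :: "'a \<Rightarrow> nat \<Rightarrow> real" and K\<^sub>\<zeta> :: real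
  assumes probe: "subgaussian M n \<zeta> K\<^sub>\<zeta>"
begin

definition lam :: real where
  "lam = 1 / (4 * K\<^sub>\<zeta>\<^sup>2 + 1)"

definition probe_coeff :: "nat set \<Rightarrow> 'a \<Rightarrow> real" where
  "probe_coeff k \<omega> = vinner n (\<lambda>i. (1 / sqrt (err k)) * projperp n Z k \<mu> i) (\<zeta> \<omega>)"

definition max_coeff_dominator :: "real \<Rightarrow> 'a \<Rightarrow> real" where
  "max_coeff_dominator t \<omega> =
     t + (1 / lam) * exp (- lam * t) * (\<Sum>j\<in>models p u. exp (lam * (probe_coeff j \<omega>)\<^sup>2))"

lemma lam_pos: "lam > 0"
  unfolding lam_def by (smt (verit) zero_le_power2 divide_pos_pos)

lemma borel_measurable_max_coeff_dominator [measurable]: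
  "(\<lambda>\<omega>. max_coeff_dominator t \<omega>) \<in> borel_measurable M"
  using subgaussian_random_vec[OF probe] unfolding max_coeff_dominator_def probe_coeff_def by measurable

lemma max_coeff_dominator_nonneg: "t \<ge> 0 \<Longrightarrow> max_coeff_dominator t \<omega> \<ge> 0"
  unfolding max_coeff_dominator_def using lam_pos by (intro add_nonneg_nonneg mult_nonneg_nonneg sum_nonneg) auto

lemma abs_cross_term_le:
  assumes "m \<in> models p u"
  shows "\<bar>vinner n \<mu> (projperp n Z m (\<zeta> \<omega>))\<bar> \<le> sqrt (err m) * \<bar>probe_coeff m \<omega>\<bar>"
proof -
  have "vinner n \<mu> (projperp n Z m (\<zeta> \<omega>)) = vinner n (projperp n Z m \<mu>) (\<zeta> \<omega>)"
    by (rule vinner_projperp_swap[OF finite_mem_models[OF assms]])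
  also have "\<dots> = sqrt (err m) * probe_coeff m \<omega>"
  proof (cases "err m = 0")
    case True
    then show ?thesis
      using vnorm2_eq_0D[of n "projperp n Z m \<mu>"] unfolding err_def by (simp add: vinner_zero_left)
  next
    case False
    then show ?thesis using err_nonneg[of m] unfolding probe_coeff_def vinner_scale_left by simp
  qed
  finally show ?thesis using err_nonneg[of m] by (simp add: abs_mult)
qed

text \<open>A smooth upper bound for \<open>max\<^sub>j (probe_coeff j)\<^sup>2\<close>, from \<open>x \<le> exp x\<close>.\<close>
lemma probe_coeff_sq_le:
  assumes "k \<in> models p u"
  shows "(probe_coeff k \<omega>)\<^sup>2 \<le> max_coeff_dominator t \<omega>"
proof -
  have "lam * ((probe_coeff k \<omega>)\<^sup>2 - t) \<le> exp (lam * ((probe_coeff k \<omega>)\<^sup>2 - t))"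
    using exp_ge_add_one_self[of "lam * ((probe_coeff k \<omega>)\<^sup>2 - t)"] by linarith
  also have "\<dots> = exp (- lam * t) * exp (lam * (probe_coeff k \<omega>)\<^sup>2)"
    by (simp add: mult_exp_exp algebra_simps)
  also have "\<dots> \<le> exp (- lam * t) * (\<Sum>j\<in>models p u. exp (lam * (probe_coeff j \<omega>)\<^sup>2))"
    using assms finite_models by (intro mult_left_mono member_le_sum) auto
  finally show ?thesis
    unfolding max_coeff_dominator_def using lam_pos by (simp add: field_simps)
qed

lemma abs_weighted_cross_le_dominator:
  assumes "S \<in> models p u" "0 \<le> t" "\<delta> > 0"
  shows "\<bar>\<Sum>m\<in>models p u. weight m \<omega> * vinner n \<mu> (projperp n Z m (\<zeta> \<omega>))\<bar>
    \<le> \<delta> / 2 * err_dominator S t \<omega> + 1 / (2 * \<delta>) * max_coeff_dominator t' \<omega>"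
proof -
  have "\<bar>vinner n \<mu> (projperp n Z m (\<zeta> \<omega>))\<bar> \<le> \<delta> / 2 * err m + 1 / (2 * \<delta>) * max_coeff_dominator t' \<omega>"
    if m: "m \<in> models p u" for m
  proof -
    have "\<bar>vinner n \<mu> (projperp n Z m (\<zeta> \<omega>))\<bar> \<le> sqrt (err m) * \<bar>probe_coeff m \<omega>\<bar>"
      by (rule abs_cross_term_le[OF m])
    also have "\<dots> \<le> (\<delta> * (sqrt (err m))\<^sup>2 + \<bar>probe_coeff m \<omega>\<bar>\<^sup>2 / \<delta>) / 2"
      by (rule amgm_weighted[OF assms(3)])
    also have "\<dots> \<le> \<delta> / 2 * err m + 1 / (2 * \<delta>) * max_coeff_dominator t' \<omega>"
      using probe_coeff_sq_le[OF m, of \<omega> t'] err_nonneg[of m] assms(3)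
      by (simp add: field_simps divide_right_mono)
    finally show ?thesis .
  qed
  then have "\<bar>weight m \<omega> * vinner n \<mu> (projperp n Z m (\<zeta> \<omega>))\<bar>
      \<le> weight m \<omega> * (\<delta> / 2 * err m + 1 / (2 * \<delta>) * max_coeff_dominator t' \<omega>)"
    if "m \<in> models p u" for m
    using mult_left_mono[OF _ weight_nonneg] that by (simp add: abs_mult abs_of_nonneg[OF weight_nonneg])
  then have "\<bar>\<Sum>m\<in>models p u. weight m \<omega> * vinner n \<mu> (projperp n Z m (\<zeta> \<omega>))\<bar>
      \<le> (\<Sum>m\<in>models p u. weight m \<omega> * (\<delta> / 2 * err m + 1 / (2 * \<delta>) * max_coeff_dominator t' \<omega>))"
    by (intro order.trans[OF sum_abs] sum_mono)
  also have "\<dots> = (\<Sum>m\<in>models p u. \<delta> / 2 * (weight m \<omega> * err m)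
      + 1 / (2 * \<delta>) * max_coeff_dominator t' \<omega> * weight m \<omega>)"
    by (intro sum.cong) (simp_all add: algebra_simps)
  also have "\<dots> = \<delta> / 2 * (\<Sum>m\<in>models p u. weight m \<omega> * err m) + 1 / (2 * \<delta>) * max_coeff_dominator t' \<omega>"
    unfolding sum.distrib sum_distrib_left[symmetric] sum_weight[OF assms(1)] by simp
  also have "\<dots> \<le> \<delta> / 2 * err_dominator S t \<omega> + 1 / (2 * \<delta>) * max_coeff_dominator t' \<omega>"
    using weighted_err_le_dominator[OF assms(1,2)] assms(3) by simp
  finally show ?thesis .
qed

lemma nn_integral_exp_probe_coeff_sq:
  "(\<integral>\<^sup>+\<omega>. ennreal (exp (lam * (probe_coeff k \<omega>)\<^sup>2)) \<partial>M) \<le> ennreal 2"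
proof (cases "err k = 0")
  case True
  interpret prob_space M by (rule prob_space)
  have "probe_coeff k \<omega> = 0" for \<omega> unfolding probe_coeff_def True vinner_def by simp
  then show ?thesis by (simp add: emeasure_space_1)
next
  case False
  then have err: "err k > 0" using err_nonneg[of k] by simp
  let ?e = "\<lambda>i. (1 / sqrt (err k)) * projperp n Z k \<mu> i"
  have "vinner n ?e ?e = 1"
    using err unfolding vinner_scale_left vinner_scale_right by (simp add: err_def vnorm2_def)
  then have o: "orthonormal n {?e}" unfolding orthonormal_def by simp
  have lam: "2 * lam * K\<^sub>\<zeta>\<^sup>2 \<le> 1 / 2"
    unfolding lam_def by (simp add: field_simps add_pos_nonneg)
  have "(\<integral>\<^sup>+\<omega>. ennreal (exp (lam * (probe_coeff k \<omega>)\<^sup>2)) \<partial>M)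
      \<le> ennreal ((1 / sqrt (1 - 2 * lam * K\<^sub>\<zeta>\<^sup>2)) ^ card {?e})"
    using subgaussian_exp_quadratic_form[OF prob_space probe _ o, of lam] lam_pos lam
    unfolding probe_coeff_def by simp
  also have "(1 / sqrt (1 - 2 * lam * K\<^sub>\<zeta>\<^sup>2)) ^ card {?e} \<le> 2"
  proof -
    have "sqrt (1 / 4) \<le> sqrt (1 - 2 * lam * K\<^sub>\<zeta>\<^sup>2)" using lam by (intro real_sqrt_le_mono) simp
    then have "1 / 2 \<le> sqrt (1 - 2 * lam * K\<^sub>\<zeta>\<^sup>2)" by (simp add: real_sqrt_divide)
    then have "1 / sqrt (1 - 2 * lam * K\<^sub>\<zeta>\<^sup>2) \<le> 1 / (1 / 2)"
      using lam by (intro divide_left_mono) auto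
    then show ?thesis by simp
  qed
  finally show ?thesis by (simp add: ennreal_leI order_trans)
qed

lemma nn_integral_max_coeff_dominator:
  "(\<integral>\<^sup>+\<omega>. ennreal (max_coeff_dominator (ln (card (models p u) + 1) / lam) \<omega>) \<partial>M)
    \<le> ennreal ((u * ln p + 3) * (4 * K\<^sub>\<zeta>\<^sup>2 + 1))"
proof -
  interpret prob_space M by (rule prob_space)
  define t where "t = ln (card (models p u) + 1) / lam"
  define c where "c = (1 / lam) * exp (- lam * t)"
  have c: "c = 1 / lam / (card (models p u) + 1)"
    unfolding c_def t_def using lam_pos by (simp add: exp_minus inverse_eq_divide)
  have t: "t \<ge> 0" unfolding t_def using lam_pos by simp
  have "(\<integral>\<^sup>+\<omega>. ennreal (\<Sum>j\<in>models p u. c * exp (lam * (probe_coeff j \<omega>)\<^sup>2)) \<partial>M)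
      \<le> ennreal (\<Sum>j\<in>models p u. c * 2)"
    using lam_pos subgaussian_random_vec[OF probe]
    by (intro nn_integral_sum_le finite_models nn_integral_exp_probe_coeff_sq)
      (auto simp: c probe_coeff_def)
  also have "(\<Sum>j\<in>models p u. c * 2) = 2 / lam * (card (models p u) / (card (models p u) + 1))"
    unfolding c by simp
  also have "\<dots> \<le> 2 / lam * 1"
    using lam_pos by (intro mult_left_mono) auto
  finally have "(\<integral>\<^sup>+\<omega>. ennreal (\<Sum>j\<in>models p u. c * exp (lam * (probe_coeff j \<omega>)\<^sup>2)) \<partial>M)
      \<le> ennreal (2 / lam)" by (simp add: ennreal_leI order_trans)
  moreover have "max_coeff_dominator t \<omega> = t + (\<Sum>j\<in>models p u. c * exp (lam * (probe_coeff j \<omega>)\<^sup>2))"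
    for \<omega> unfolding max_coeff_dominator_def c_def by (simp add: sum_distrib_left mult.assoc)
  moreover have "0 \<le> c" unfolding c using lam_pos by simp
  ultimately have "(\<integral>\<^sup>+\<omega>. ennreal (max_coeff_dominator t \<omega>) \<partial>M) \<le> ennreal (t + 2 / lam)"
    using t lam_pos subgaussian_random_vec[OF probe]
    by (simp add: ennreal_plus nn_integral_add emeasure_space_1 sum_nonneg probe_coeff_def add_left_mono)
  also have "t + 2 / lam = (ln (card (models p u) + 1) + 2) * (4 * K\<^sub>\<zeta>\<^sup>2 + 1)"
    unfolding t_def lam_def by (simp add: field_simps)
  also have "\<dots> \<le> (u * ln p + 3) * (4 * K\<^sub>\<zeta>\<^sup>2 + 1)"
    using ln_card_models_le[of p u] by (intro mult_right_mono) (auto simp: add.commute)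
  finally show ?thesis unfolding t_def by (simp add: ennreal_leI)
qed

end

lemma abs_integral_le_of_nn_integral:
  fixes f :: "'a \<Rightarrow> real"
  assumes "(\<integral>\<^sup>+\<omega>. ennreal \<bar>f \<omega>\<bar> \<partial>M) \<le> ennreal R" "0 \<le> R"
  shows "\<bar>integral\<^sup>L M f\<bar> \<le> R"
proof (cases "integrable M f")
  case True
  have "ennreal \<bar>integral\<^sup>L M f\<bar> \<le> (\<integral>\<^sup>+\<omega>. ennreal \<bar>f \<omega>\<bar> \<partial>M)"
    using integral_norm_bound_ennreal[OF True] by simp
  also have "\<dots> \<le> ennreal R" by fact
  finally show ?thesis using assms(2) by simp
next
  case False
  then show ?thesis using assms(2) by (simp add: not_integrable_integral_eq)
qed

lemma models_reference:
  assumes "S \<in> models p s" "s \<le> u" "u \<le> p"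
  obtains S' where "S' \<in> models p u" "vnorm2 n (projperp n Z S' \<mu>) \<le> vnorm2 n (projperp n Z S \<mu>)"
proof -
  obtain S' where S': "S \<subseteq> S'" "S' \<in> models p u" by (rule models_extend[OF assms])
  show ?thesis by (rule that[OF S'(2) projperp_antimono[OF finite_mem_models[OF S'(2)] S'(1)]])
qed

lemma expected_weighted_err_le:
  assumes "prob_space M" "subgaussian M n \<xi> K" "\<alpha> > 4 * K\<^sup>2" "S \<in> models p s" "s \<le> u" "0 \<le> t"
  shows "\<bar>\<integral>\<omega>. (\<Sum>m\<in>models p u. expweight n p Z u \<alpha> (\<lambda>i. \<mu> i + \<xi> \<omega> i) m
              * vnorm2 n (projperp n Z m \<mu>)) \<partial>M\<bar>
    \<le> t + 2 * \<alpha> / decay_rate K \<alpha> * exp (u * ln p + growth_rate K \<alpha> * vnorm2 n (projperp n Z S \<mu>) / \<alpha>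
           + u * dim_rate K \<alpha> - decay_rate K \<alpha> / (2 * \<alpha>) * t)"
proof -
  interpret exponential_weights n p u Z \<alpha> K \<mu> M \<xi> using assms(1-3) by (rule exponential_weights.intro)
  have c1: "c1 > 0" by (rule decay_rate_pos[OF alpha])
  show ?thesis
  proof (cases "u \<le> p")
    case False
    then show ?thesis using models_empty[of p u] assms(6) c1 alpha_pos by simp
  next
    case True
    obtain S' where S': "S' \<in> models p u" "err S' \<le> vnorm2 n (projperp n Z S \<mu>)"
      using models_reference[OF assms(4,5) True] unfolding err_def by blast
    have "(\<integral>\<^sup>+\<omega>. ennreal \<bar>\<Sum>m\<in>models p u. weight m \<omega> * err m\<bar> \<partial>M)
        \<le> (\<integral>\<^sup>+\<omega>. ennreal (err_dominator S' t \<omega>) \<partial>M)"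
      using weighted_err_le_dominator[OF S'(1) assms(6)]
      by (intro nn_integral_mono ennreal_leI) (simp add: sum_nonneg weight_nonneg err_nonneg)
    also have "\<dots> \<le> ennreal (t + 2 * \<alpha> / c1 * exp (u * ln p + c2 * vnorm2 n (projperp n Z S \<mu>) / \<alpha>
             + u * L - c1 / (2 * \<alpha>) * t))"
      by (rule nn_integral_err_dominator[OF S'(1) assms(6) S'(2)])
    finally show ?thesis
      using assms(6) c1 alpha_pos
      by (intro abs_integral_le_of_nn_integral) (simp_all add: weight_def err_def)
  qed
qed

lemma expected_weighted_cross_le:
  assumes "prob_space M" "subgaussian M n \<xi> K" "\<alpha> > 4 * K\<^sup>2" "subgaussian M n \<zeta> K\<^sub>\<zeta>"
    "S \<in> models p s" "s \<le> u" "0 \<le> t" "\<delta> > 0"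
  shows "\<bar>\<integral>\<omega>. (\<Sum>m\<in>models p u. expweight n p Z u \<alpha> (\<lambda>i. \<mu> i + \<xi> \<omega> i) m
              * vinner n \<mu> (projperp n Z m (\<zeta> \<omega>))) \<partial>M\<bar>
    \<le> \<delta> / 2 * (t + 2 * \<alpha> / decay_rate K \<alpha> * exp (u * ln p
           + growth_rate K \<alpha> * vnorm2 n (projperp n Z S \<mu>) / \<alpha> + u * dim_rate K \<alpha> - decay_rate K \<alpha> / (2 * \<alpha>) * t))
      + (u * ln p + 3) * (4 * K\<^sub>\<zeta>\<^sup>2 + 1) / 2 / \<delta>"
proof -
  interpret exponential_weights_cross n p u Z \<alpha> K \<mu> M \<xi> \<zeta> K\<^sub>\<zeta>
    using assms(1-4) by (intro exponential_weights_cross.intro exponential_weights.intro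
        exponential_weights_cross_axioms.intro)
  have c1: "c1 > 0" by (rule decay_rate_pos[OF alpha])
  have lnp: "0 \<le> u * ln p" by (cases "p = 0") auto
  define B where "B = t + 2 * \<alpha> / c1 * exp (u * ln p + c2 * vnorm2 n (projperp n Z S \<mu>) / \<alpha>
    + u * L - c1 / (2 * \<alpha>) * t)"
  have B: "0 \<le> B" unfolding B_def using assms(7) c1 alpha_pos by simp
  show ?thesis
  proof (cases "u \<le> p")
    case False
    then show ?thesis using models_empty[of p u] assms(8) B lnp unfolding B_def by simp
  next
    case True
    obtain S' where S': "S' \<in> models p u" "err S' \<le> vnorm2 n (projperp n Z S \<mu>)"
      using models_reference[OF assms(5,6) True] unfolding err_def by blast
    define t' where "t' = ln (card (models p u) + 1) / lam"
    have "(\<integral>\<^sup>+\<omega>. ennreal \<bar>\<Sum>m\<in>models p u. weight m \<omega> * vinner n \<mu> (projperp n Z m (\<zeta> \<omega>))\<bar> \<partial>M)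
        \<le> (\<integral>\<^sup>+\<omega>. ennreal (\<delta> / 2 * err_dominator S' t \<omega> + 1 / (2 * \<delta>) * max_coeff_dominator t' \<omega>) \<partial>M)"
      by (intro nn_integral_mono ennreal_leI abs_weighted_cross_le_dominator[OF S'(1) assms(7,8)])
    also have "\<dots> \<le> ennreal (\<delta> / 2 * B + 1 / (2 * \<delta>) * ((u * ln p + 3) * (4 * K\<^sub>\<zeta>\<^sup>2 + 1)))"
      unfolding B_def t'_def
      using nn_integral_err_dominator[OF S'(1) assms(7) S'(2)] nn_integral_max_coeff_dominator
        assms(7,8) B[unfolded B_def] lnp lam_pos
      by (intro nn_integral_lincomb_le) (auto intro: max_coeff_dominator_nonneg err_dominator_nonneg)
    finally show ?thesis
      unfolding B_def using assms(8) B[unfolded B_def] lnp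
      by (intro abs_integral_le_of_nn_integral) (simp_all add: weight_def add_nonneg_nonneg)
  qed
qed

section \<open>Asymptotics\<close>

lemma filterlim_real_powr_at_top:
  assumes "0 < \<tau>"
  shows "filterlim (\<lambda>n. real n powr \<tau>) at_top at_top"
  unfolding filterlim_at_top
proof
  fix C :: real
  define N where "N = nat \<lceil>max 1 C powr (1 / \<tau>)\<rceil>"
  show "eventually (\<lambda>n. C \<le> real n powr \<tau>) at_top"
  proof (rule eventually_at_top_linorderI[of N])
    fix n assume "N \<le> n"
    then have "max 1 C powr (1 / \<tau>) \<le> real n" unfolding N_def by linarith
    then have "(max 1 C powr (1 / \<tau>)) powr \<tau> \<le> real n powr \<tau>"
      using assms by (intro powr_mono2) auto
    then show "C \<le> real n powr \<tau>" using assms by (simp add: powr_powr)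
  qed
qed

lemma const_in_smallo: "filterlim g at_top F \<Longrightarrow> (\<lambda>_. c) \<in> o[F](g)"
  for g :: "'a \<Rightarrow> real"
proof (rule landau_o.smallI)
  fix e :: real assume "e > 0" "filterlim g at_top F"
  then have "eventually (\<lambda>x. \<bar>c\<bar> / e \<le> g x) F" by (simp add: filterlim_at_top)
  then show "eventually (\<lambda>x. norm c \<le> e * norm (g x)) F"
  proof eventually_elim
    case (elim x)
    then have "\<bar>c\<bar> \<le> e * g x" using \<open>e > 0\<close> by (simp add: field_simps)
    moreover have "e * g x \<le> e * \<bar>g x\<bar>" using \<open>e > 0\<close> by (intro mult_left_mono) auto
    ultimately show ?case by simp
  qed
qed

lemma smallo_cmult: "f \<in> o[F](g) \<Longrightarrow> (\<lambda>x. c * f x) \<in> o[F](g)"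
  for f g :: "'a \<Rightarrow> real"
  by (cases "c = 0") simp_all

lemma smallo_mult_ln:
  fixes f P :: "nat \<Rightarrow> real" and q :: "nat \<Rightarrow> nat"
  assumes "f \<in> o(\<lambda>n. P n / ln (real (q n)))"
  shows "(\<lambda>n. f n * ln (real (q n))) \<in> o(P)"
proof (rule landau_o.smallI)
  fix e :: real assume "e > 0"
  from landau_o.smallD[OF assms this]
  show "eventually (\<lambda>n. norm (f n * ln (real (q n))) \<le> e * norm (P n)) at_top"
  proof eventually_elim
    case (elim n)
    then have "\<bar>f n\<bar> * \<bar>ln (real (q n))\<bar> \<le> e * \<bar>P n\<bar> / \<bar>ln (real (q n))\<bar> * \<bar>ln (real (q n))\<bar>"
      by (intro mult_right_mono) (simp_all add: abs_divide)
    then show ?case using \<open>e > 0\<close> by (cases "ln (real (q n)) = 0") (simp_all add: abs_mult)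
  qed
qed

lemma smallo_of_smallo_div_ln:
  fixes f P :: "nat \<Rightarrow> real" and q :: "nat \<Rightarrow> nat"
  assumes "f \<in> o(\<lambda>n. P n / ln (real (q n)))"
  shows "f \<in> o(P)"
proof (rule landau_o.smallI)
  fix e :: real assume "e > 0"
  then have "e * ln 2 > 0" by simp
  from landau_o.smallD[OF assms this]
  show "eventually (\<lambda>n. norm (f n) \<le> e * norm (P n)) at_top"
  proof eventually_elim
    case (elim n)
    show ?case
    proof (cases "q n \<le> 1")
      case True
      then have "ln (real (q n)) = 0" by (cases "q n") auto
      then show ?thesis using elim \<open>0 < e\<close> by simp
    next
      case False
      then have ln: "ln 2 \<le> ln (real (q n))" "0 < ln (real (q n))" by simp_all
      have "\<bar>f n\<bar> \<le> e * ln 2 * \<bar>P n\<bar> / ln (real (q n))"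
        using elim ln by (simp add: abs_divide)
      also have "\<dots> \<le> e * ln (real (q n)) * \<bar>P n\<bar> / ln (real (q n))"
        using ln \<open>0 < e\<close> by (intro divide_right_mono mult_right_mono mult_left_mono) auto
      finally show ?thesis using ln by simp
    qed
  qed
qed

lemma smallo_of_tail_bound:
  fixes X g P :: "nat \<Rightarrow> real"
  assumes bound: "eventually (\<lambda>n. \<forall>t\<ge>0. \<bar>X n\<bar> \<le> t + C * exp (g n - c * t)) at_top"
    and g: "g \<in> o(P)" and c: "c > 0" and C: "C \<ge> 0" and P: "filterlim P at_top at_top"
  shows "X \<in> o(P)"
proof (rule landau_o.smallI)
  fix e :: real assume e: "e > 0"
  have "eventually (\<lambda>n. \<bar>g n\<bar> \<le> c * (e / 2) * \<bar>P n\<bar>) at_top"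
    using landau_o.smallD[OF g, of "c * (e / 2)"] c e by simp
  moreover have "eventually (\<lambda>n. 2 * C / e \<le> P n) at_top" "eventually (\<lambda>n. 0 \<le> P n) at_top"
    using P by (simp_all add: filterlim_at_top)
  ultimately show "eventually (\<lambda>n. norm (X n) \<le> e * norm (P n)) at_top"
    using bound
  proof eventually_elim
    case (elim n)
    have "\<bar>X n\<bar> \<le> e / 2 * P n + C * exp (g n - c * (e / 2 * P n))"
      using elim(4)[rule_format, of "e / 2 * P n"] elim(3) e by simp
    also have "\<dots> \<le> e / 2 * P n + C"
      using elim(1,3) C by (simp add: mult_left_le abs_le_iff mult_ac)
    also have "\<dots> \<le> e * P n" using elim(2) e by (simp add: field_simps)
    finally show ?case using elim(3) by simp
  qed
qed

lemma smallo_of_amgm_tail_bound: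
  fixes X g R P :: "nat \<Rightarrow> real"
  assumes bound: "eventually (\<lambda>n. \<forall>t\<ge>0. \<forall>\<delta>>0.
      \<bar>X n\<bar> \<le> \<delta> / 2 * (t + C * exp (g n - c * t)) + R n / \<delta>) at_top"
    and g: "g \<in> o(P)" and R: "R \<in> o(P)" and c: "c > 0" and C: "C \<ge> 0"
    and P: "filterlim P at_top at_top"
  shows "X \<in> o(P)"
proof (rule landau_o.smallI)
  fix e :: real assume e: "e > 0"
  have "eventually (\<lambda>n. \<bar>g n\<bar> \<le> c * \<bar>P n\<bar>) at_top"
    using landau_o.smallD[OF g c] by simp
  moreover have "eventually (\<lambda>n. \<bar>R n\<bar> \<le> e\<^sup>2 / 4 * \<bar>P n\<bar>) at_top"
    using landau_o.smallD[OF R, of "e\<^sup>2 / 4"] e by simp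
  moreover have "eventually (\<lambda>n. C \<le> P n) at_top" "eventually (\<lambda>n. 0 \<le> P n) at_top"
    using P by (simp_all add: filterlim_at_top)
  ultimately show "eventually (\<lambda>n. norm (X n) \<le> e * norm (P n)) at_top"
    using bound
  proof eventually_elim
    case (elim n)
    have "\<bar>X n\<bar> \<le> e / 4 * (P n + C * exp (g n - c * P n)) + R n / (e / 2)"
      using elim(5)[rule_format, of "P n" "e / 2"] elim(4) e by (simp add: field_simps)
    also have "\<dots> \<le> e / 4 * (P n + C) + e / 2 * P n"
    proof (intro add_mono mult_left_mono)
      show "C * exp (g n - c * P n) \<le> C"
        using elim(1,4) C by (simp add: mult_left_le abs_le_iff mult_ac)
      show "R n / (e / 2) \<le> e / 2 * P n"
        using elim(2,4) e by (simp add: field_simps power2_eq_square)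
    qed (use e in auto)
    also have "\<dots> \<le> e * P n" using elim(3) e by (simp add: field_simps)
    finally show ?case using elim(4) by simp
  qed
qed

theorem mainTheorem3:
  fixes \<tau> \<alpha> K\<^sub>\<xi> K\<^sub>\<zeta> :: real
    and p s u :: "nat \<Rightarrow> nat"
    and \<mu> :: "nat \<Rightarrow> nat \<Rightarrow> real"
    and Z :: "nat \<Rightarrow> nat \<Rightarrow> nat \<Rightarrow> real"
    and M :: "nat \<Rightarrow> 'a measure"
    and \<xi> \<zeta> :: "nat \<Rightarrow> 'a \<Rightarrow> nat \<Rightarrow> real"
  assumes tau: "0 < \<tau>" "\<tau> \<le> 1"
    and prob: "\<And>n. prob_space (M n)"
    and xi_sg: "\<And>n. subgaussian (M n) n (\<xi> n) K\<^sub>\<xi>"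
    and mu_bound: "(\<lambda>n. vnorm2 n (\<mu> n)) \<in> O(\<lambda>n. real n)"
    and sparse: "weakly_sparse \<mu> Z p s (\<lambda>n. real n powr \<tau>)"
    and u_ge_s: "eventually (\<lambda>n. s n \<le> u n) sequentially"
    and u_small: "(\<lambda>n. real (u n)) \<in> o(\<lambda>n. real n powr \<tau> / ln (real (p n)))"
    and alpha: "\<alpha> > 4 * K\<^sub>\<xi>\<^sup>2"
    and zeta_sg: "\<And>n. subgaussian (M n) n (\<zeta> n) K\<^sub>\<zeta>"
  shows "((\<lambda>n. \<integral>\<omega>. (\<Sum>m\<in>models (p n) (u n).
             expweight n (p n) (Z n) (u n) \<alpha> (\<lambda>i. \<mu> n i + \<xi> n \<omega> i) m
               * vnorm2 n (projperp n (Z n) m (\<mu> n))) \<partial>M n)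
           \<in> o(\<lambda>n. real n powr \<tau>)) \<and>
         ((\<lambda>n. \<integral>\<omega>. (\<Sum>m\<in>models (p n) (u n).
             expweight n (p n) (Z n) (u n) \<alpha> (\<lambda>i. \<mu> n i + \<xi> n \<omega> i) m
               * vinner n (\<mu> n) (projperp n (Z n) m (\<zeta> n \<omega>))) \<partial>M n)
           \<in> o(\<lambda>n. real n powr \<tau>))"
proof -
  obtain S where S: "\<And>n. S n \<in> models (p n) (s n)"
    and err_S: "(\<lambda>n. vnorm2 n (projperp n (Z n) (S n) (\<mu> n))) \<in> o(\<lambda>n. real n powr \<tau>)"
    using sparse unfolding weakly_sparse_def by blast
  note P = filterlim_real_powr_at_top[OF tau(1)]
  have ulnp: "(\<lambda>n. real (u n) * ln (real (p n))) \<in> o(\<lambda>n. real n powr \<tau>)"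
    and u: "(\<lambda>n. real (u n)) \<in> o(\<lambda>n. real n powr \<tau>)"
    using smallo_mult_ln[OF u_small] smallo_of_smallo_div_ln[OF u_small] .
  let ?g = "\<lambda>n. real (u n) * ln (real (p n)) + growth_rate K\<^sub>\<xi> \<alpha> * vnorm2 n (projperp n (Z n) (S n) (\<mu> n)) / \<alpha>
    + real (u n) * dim_rate K\<^sub>\<xi> \<alpha>"
  have g: "?g \<in> o(\<lambda>n. real n powr \<tau>)"
    using ulnp smallo_cmult[OF err_S, of "growth_rate K\<^sub>\<xi> \<alpha> / \<alpha>"] smallo_cmult[OF u, of "dim_rate K\<^sub>\<xi> \<alpha>"]
    by (intro sum_in_smallo) (simp_all add: mult.commute)
  have R: "(\<lambda>n. (real (u n) * ln (real (p n)) + 3) * (4 * K\<^sub>\<zeta>\<^sup>2 + 1) / 2) \<in> o(\<lambda>n. real n powr \<tau>)"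
    using ulnp const_in_smallo[OF P] by (simp add: sum_in_smallo)
  have \<alpha>: "0 < decay_rate K\<^sub>\<xi> \<alpha> / (2 * \<alpha>)" "0 \<le> 2 * \<alpha> / decay_rate K\<^sub>\<xi> \<alpha>"
    using decay_rate_pos[OF alpha] pos_of_gt_four_sq[OF alpha] by simp_all
  show ?thesis
    apply (rule conjI)
    subgoal
      using u_ge_s expected_weighted_err_le[OF prob xi_sg alpha S]
      by (intro smallo_of_tail_bound[OF _ g \<alpha> P]) (auto elim!: eventually_mono)
    subgoal
      using u_ge_s expected_weighted_cross_le[OF prob xi_sg alpha zeta_sg S]
      by (intro smallo_of_amgm_tail_bound[OF _ g R \<alpha> P]) (auto elim!: eventually_mono)
    done
qed

end
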